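(* Let $\mathcal C$ be a depth-$\Delta$ Clifford circuit on $n$ qubits with linear outcome code $\mathcal O(\mathcal C)$. The group of all operators in $\overline{\mathcal P}_{n(\Delta+1)}$ that commute with every $\overleftarrow{F(u)}$, $u\in\mathcal O(\mathcal C)^\perp$ (the stabilizers and logical operators of the spacetime code), is generated by: (i) the operators $\eta_{\Delta+0.5}(P)$, $P$ ranging over a basis of $\overline{\mathcal P}_n$; (ii) for each $\ell=1,\dots,\Delta$, the operators $G(P,\ell)$, $P$ ranging over a basis of the space of Pauli operators in $\overline{\mathcal P}_n$ commuting with all operators measured at level $\ell$; (iii) the operators $L(v)$, $v$ ranging over a basis of $\mathcal O(\mathcal C)$.
   Context: A Clifford circuit on $n$ qubits is a finite sequence of operations, each a unitary Clifford gate or the measurement of a Hermitian $n$-qubit Pauli, each with a level in $\{1,2,\dots\}$; operations of equal level have disjoint supports and levels are nondecreasing; depth $\Delta$ = maximal level. In circuit order the $j$-th measurement measures $S_j$ at level $\ell_j$ ($j=1,\dots,m$); outcome $o_j=0$ for eigenvalue $+1$, $1$ for $-1$. The outcome code $\mathcal O(\mathcal C)\subseteq\mathbb Z_2^m$ is the set of outcome bit-strings occurring with nonzero probability for some input state; $\perp$ refers to $(u|v)=\sum u_iv_i\bmod2$. $\overline{\mathcal P}_N$ is the $N$-qubit Pauli group modulo phases. $U_\ell$ is the product of the unitary gates of level $\ell$ (identity if none). Fault operators $F\in\overline{\mathcal P}_{n(\Delta+1)}$ act on qubits $(\ell+0.5,q)$, $0\le\ell\le\Delta$, $1\le q\le n$,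 with level components $F_{\ell+0.5}$; $\eta_{\ell+0.5}(P)$ is $P$ at level $\ell+0.5$ and $I$ elsewhere. Back-cumulant $\overleftarrow F$: start with $F$; for $\ell=\Delta,\dots,1$ replace $\overleftarrow F_{\ell-0.5}$ by $\overleftarrow F_{\ell-0.5}\cdot U_\ell^{-1}\overleftarrow F_{\ell+0.5}U_\ell$. $F(u)=\prod_j\eta_{\ell_j-0.5}(S_j^{u_j})$. For $1\le\ell\le\Delta$ and $P\in\overline{\mathcal P}_n$, $G(P,\ell)=\eta_{\ell-0.5}(P)\,\eta_{\ell+0.5}(U_\ell PU_\ell^{-1})$. For each $j$, fix a Pauli operator $P_j\in\overline{\mathcal P}_n$ supported within the support of $S_j$ and anticommuting with $S_j$; for $v\in\mathbb Z_2^m$, $L(v)=\prod_{j=1}^m G(P_j,\ell_j)^{v_j}$. *)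

theory Defs
  imports "Jordan_Normal_Form.Matrix"
begin

text \<open>An element of the n-qubit Pauli group modulo phases is stored as a map
  qubit index to its (x,z) bits: (False,False)=I, (True,False)=X, (False,True)=Z,
  (True,True)=Y.  Qubits are 0,...,n-1; the element is required to be I on qubits >= n.\<close>

type_synonym pv = "nat \<Rightarrow> bool \<times> bool"

definition pv_valid :: "nat \<Rightarrow> pv \<Rightarrow> bool" where
  "pv_valid n p \<longleftrightarrow> (\<forall>q\<ge>n. p q = (False, False))"

definition pv_one :: pv where
  "pv_one = (\<lambda>_. (False, False))"

definition pv_mult :: "pv \<Rightarrow> pv \<Rightarrow> pv" where
  "pv_mult p r = (\<lambda>q. (fst (p q) \<noteq> fst (r q), snd (p q) \<noteq> snd (r q)))"

definition pv_supp :: "pv \<Rightarrow> nat set" where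
  "pv_supp p = {q. p q \<noteq> (False, False)}"

definition pv_anticomm_at :: "pv \<Rightarrow> pv \<Rightarrow> nat \<Rightarrow> bool" where
  "pv_anticomm_at p r q \<longleftrightarrow> ((fst (p q) \<and> snd (r q)) \<noteq> (snd (p q) \<and> fst (r q)))"

definition pv_commute :: "nat \<Rightarrow> pv \<Rightarrow> pv \<Rightarrow> bool" where
  "pv_commute n p r \<longleftrightarrow> even (card {q. q < n \<and> pv_anticomm_at p r q})"

text \<open>Single-qubit Pauli matrices I, X, Z, Y; basis index False = |0>, True = |1>.\<close>
definition sigma :: "bool \<times> bool \<Rightarrow> bool \<Rightarrow> bool \<Rightarrow> complex" where
  "sigma xz a b =
     (if xz = (False, False) then (if a = b then 1 else 0)
      else if xz = (True, False) then (if a \<noteq> b then 1 else 0)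
      else if xz = (False, True) then (if a = b then (if a then -1 else 1) else 0)
      else (if a \<noteq> b then (if a then \<i> else - \<i>) else 0))"

text \<open>The tensor-product Pauli matrix on n qubits (qubit q = bit q of the basis index).\<close>
definition pmat :: "nat \<Rightarrow> pv \<Rightarrow> complex mat" where
  "pmat n p = mat (2 ^ n) (2 ^ n) (\<lambda>(i, j). \<Prod>q<n. sigma (p q) (bit i q) (bit j q))"

definition adj :: "complex mat \<Rightarrow> complex mat" where
  "adj M = mat (dim_col M) (dim_row M) (\<lambda>(i, j). cnj (M $$ (j, i)))"

definition unitary_n :: "nat \<Rightarrow> complex mat \<Rightarrow> bool" where
  "unitary_n n U \<longleftrightarrow> U \<in> carrier_mat (2 ^ n) (2 ^ n) \<and> adj U * U = 1\<^sub>m (2 ^ n)"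

definition clifford_n :: "nat \<Rightarrow> complex mat \<Rightarrow> bool" where
  "clifford_n n U \<longleftrightarrow> (\<forall>p. pv_valid n p \<longrightarrow>
      (\<exists>c r. pv_valid n r \<and> U * pmat n p * adj U = c \<cdot>\<^sub>m pmat n r))"

definition agree_on :: "nat set \<Rightarrow> nat \<Rightarrow> nat \<Rightarrow> bool" where
  "agree_on S i j \<longleftrightarrow> (\<forall>q\<in>S. bit i q = bit j q)"

text \<open>U = V \<otimes> identity on the qubits outside A (entrywise description of the tensor product).\<close>
definition acts_within :: "nat \<Rightarrow> nat set \<Rightarrow> complex mat \<Rightarrow> bool" where
  "acts_within n A U \<longleftrightarrow>
     (\<forall>i<2^n. \<forall>j<2^n. \<not> agree_on ({..<n} - A) i j \<longrightarrow> U $$ (i, j) = 0) \<and>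
     (\<forall>i<2^n. \<forall>j<2^n. \<forall>i'<2^n. \<forall>j'<2^n.
        agree_on A i i' \<and> agree_on A j j' \<and> agree_on ({..<n} - A) i j \<and> agree_on ({..<n} - A) i' j'
        \<longrightarrow> U $$ (i, j) = U $$ (i', j'))"

text \<open>U P U^{-1} modulo phases (U unitary, so U^{-1} = adj U).\<close>
definition conj_pv :: "nat \<Rightarrow> complex mat \<Rightarrow> pv \<Rightarrow> pv" where
  "conj_pv n U p = (THE r. pv_valid n r \<and> (\<exists>c. U * pmat n p * adj U = c \<cdot>\<^sub>m pmat n r))"

text \<open>Gate A U l: unitary U acting within support A at level l.
  Meas s p l: measurement at level l of the Hermitian Pauli (-1)^s * pmat p.\<close>
datatype cop = Gate "nat set" "complex mat" nat | Meas bool pv nat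

fun op_level :: "cop \<Rightarrow> nat" where
  "op_level (Gate A U l) = l"
| "op_level (Meas s p l) = l"

fun op_supp :: "cop \<Rightarrow> nat set" where
  "op_supp (Gate A U l) = A"
| "op_supp (Meas s p l) = pv_supp p"

fun op_valid :: "nat \<Rightarrow> cop \<Rightarrow> bool" where
  "op_valid n (Gate A U l) \<longleftrightarrow> A \<subseteq> {..<n} \<and> unitary_n n U \<and> clifford_n n U \<and> acts_within n A U"
| "op_valid n (Meas s p l) \<longleftrightarrow> pv_valid n p"

definition clifford_circuit :: "nat \<Rightarrow> cop list \<Rightarrow> bool" where
  "clifford_circuit n C \<longleftrightarrow>
     (\<forall>x\<in>set C. op_valid n x \<and> 1 \<le> op_level x) \<and>
     sorted (map op_level C) \<and>
     (\<forall>i<length C. \<forall>k<length C. i \<noteq> k \<and> op_level (C ! i) = op_level (C ! k)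
        \<longrightarrow> op_supp (C ! i) \<inter> op_supp (C ! k) = {})"

definition depth :: "cop list \<Rightarrow> nat" where
  "depth C = Max (insert 0 (op_level ` set C))"

text \<open>The measurements in circuit order: (sign, Pauli mod phase, level).\<close>
fun meas_list :: "cop list \<Rightarrow> (bool \<times> pv \<times> nat) list" where
  "meas_list [] = []"
| "meas_list (Gate A U l # C) = meas_list C"
| "meas_list (Meas s p l # C) = (s, p, l) # meas_list C"

definition nmeas :: "cop list \<Rightarrow> nat" where
  "nmeas C = length (meas_list C)"

text \<open>S_j modulo phases and its level l_j (j = 0,...,m-1).\<close>
definition meas_pauli :: "cop list \<Rightarrow> nat \<Rightarrow> pv" where
  "meas_pauli C j = fst (snd (meas_list C ! j))"

definition meas_level :: "cop list \<Rightarrow> nat \<Rightarrow> nat" where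
  "meas_level C j = snd (snd (meas_list C ! j))"

text \<open>U_l: product of the unitary gates of level l (later gates to the left).\<close>
definition Umat :: "nat \<Rightarrow> cop list \<Rightarrow> nat \<Rightarrow> complex mat" where
  "Umat n C l = foldl (\<lambda>acc g. case g of Gate A U l' \<Rightarrow> if l' = l then U * acc else acc | Meas s p l' \<Rightarrow> acc)
                 (1\<^sub>m (2 ^ n)) C"

text \<open>Bit strings in Z_2^m: functions vanishing at indices >= m.\<close>
definition bs_valid :: "nat \<Rightarrow> (nat \<Rightarrow> bool) \<Rightarrow> bool" where
  "bs_valid m w \<longleftrightarrow> (\<forall>j\<ge>m. \<not> w j)"

definition bs_zero :: "nat \<Rightarrow> bool" where
  "bs_zero = (\<lambda>_. False)"

definition bs_xor :: "(nat \<Rightarrow> bool) \<Rightarrow> (nat \<Rightarrow> bool) \<Rightarrow> nat \<Rightarrow> bool" where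
  "bs_xor a b = (\<lambda>j. a j \<noteq> b j)"

definition proj :: "nat \<Rightarrow> bool \<Rightarrow> pv \<Rightarrow> bool \<Rightarrow> complex mat" where
  "proj n s p b = (1 / 2 :: complex) \<cdot>\<^sub>m
     (1\<^sub>m (2 ^ n) + ((if s then -1 else 1) * (if b then -1 else 1) :: complex) \<cdot>\<^sub>m pmat n p)"

text \<open>Unnormalised evolution operator for outcome string o (j counts measurements).\<close>
fun kraus :: "nat \<Rightarrow> cop list \<Rightarrow> (nat \<Rightarrow> bool) \<Rightarrow> nat \<Rightarrow> complex mat \<Rightarrow> complex mat" where
  "kraus n [] w j M = M"
| "kraus n (Gate A U l # C) w j M = kraus n C w j (U * M)"
| "kraus n (Meas s p l # C) w j M = kraus n C w (Suc j) (proj n s p (w j) * M)"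

definition sqnorm :: "nat \<Rightarrow> complex vec \<Rightarrow> real" where
  "sqnorm d v = (\<Sum>i<d. (cmod (v $ i))\<^sup>2)"

definition outcome_prob :: "nat \<Rightarrow> cop list \<Rightarrow> (nat \<Rightarrow> bool) \<Rightarrow> complex vec \<Rightarrow> real" where
  "outcome_prob n C w psi = sqnorm (2 ^ n) (kraus n C w 0 (1\<^sub>m (2 ^ n)) *\<^sub>v psi)"

definition outcome_code :: "nat \<Rightarrow> cop list \<Rightarrow> (nat \<Rightarrow> bool) set" where
  "outcome_code n C = {w. bs_valid (nmeas C) w \<and>
      (\<exists>psi \<in> carrier_vec (2 ^ n). sqnorm (2 ^ n) psi = 1 \<and> outcome_prob n C w psi \<noteq> 0)}"

definition linear_code :: "(nat \<Rightarrow> bool) set \<Rightarrow> bool" where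
  "linear_code Oc \<longleftrightarrow> bs_zero \<in> Oc \<and> (\<forall>a\<in>Oc. \<forall>b\<in>Oc. bs_xor a b \<in> Oc)"

definition bs_perp :: "nat \<Rightarrow> (nat \<Rightarrow> bool) set \<Rightarrow> (nat \<Rightarrow> bool) set" where
  "bs_perp m Oc = {u. bs_valid m u \<and> (\<forall>w\<in>Oc. even (card {j. j < m \<and> u j \<and> w j}))}"

text \<open>A fault operator in the Pauli group mod phases on qubits (l+0.5, q), 0 <= l <= Delta:
  stored as level index l (standing for l+0.5) to its n-qubit component.\<close>
type_synonym stp = "nat \<Rightarrow> pv"

definition st_valid :: "nat \<Rightarrow> nat \<Rightarrow> stp \<Rightarrow> bool" where
  "st_valid n D F \<longleftrightarrow> (\<forall>l. pv_valid n (F l)) \<and> (\<forall>l>D. F l = pv_one)"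

definition st_one :: stp where
  "st_one = (\<lambda>_. pv_one)"

definition st_mult :: "stp \<Rightarrow> stp \<Rightarrow> stp" where
  "st_mult F G = (\<lambda>l. pv_mult (F l) (G l))"

definition st_commute :: "nat \<Rightarrow> nat \<Rightarrow> stp \<Rightarrow> stp \<Rightarrow> bool" where
  "st_commute n D F G \<longleftrightarrow> even (card {(l, q). l \<le> D \<and> q < n \<and> pv_anticomm_at (F l) (G l) q})"

text \<open>eta l P = eta_{l+0.5}(P).\<close>
definition eta :: "nat \<Rightarrow> pv \<Rightarrow> stp" where
  "eta l P = (\<lambda>k. if k = l then P else pv_one)"

text \<open>Component with index depth C - d of the back-cumulant.\<close>
fun bcl :: "nat \<Rightarrow> cop list \<Rightarrow> stp \<Rightarrow> nat \<Rightarrow> pv" where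
  "bcl n C F 0 = F (depth C)"
| "bcl n C F (Suc d) = pv_mult (F (depth C - Suc d))
      (conj_pv n (adj (Umat n C (depth C - d))) (bcl n C F d))"

definition backcum :: "nat \<Rightarrow> cop list \<Rightarrow> stp \<Rightarrow> stp" where
  "backcum n C F = (\<lambda>l. if l \<le> depth C then bcl n C F (depth C - l) else F l)"

text \<open>F(u) = prod_j eta_{l_j - 0.5}(S_j^{u_j}).\<close>
definition fault_of :: "cop list \<Rightarrow> (nat \<Rightarrow> bool) \<Rightarrow> stp" where
  "fault_of C u = foldr (\<lambda>j acc. if u j then st_mult (eta (meas_level C j - 1) (meas_pauli C j)) acc else acc)
      [0..<nmeas C] st_one"

text \<open>G(P,l) = eta_{l-0.5}(P) eta_{l+0.5}(U_l P U_l^{-1}).\<close>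
definition Gop :: "nat \<Rightarrow> cop list \<Rightarrow> pv \<Rightarrow> nat \<Rightarrow> stp" where
  "Gop n C P l = st_mult (eta (l - 1) P) (eta l (conj_pv n (Umat n C l) P))"

text \<open>L(v) = prod_j G(P_j, l_j)^{v_j}.\<close>
definition Lop :: "nat \<Rightarrow> cop list \<Rightarrow> (nat \<Rightarrow> pv) \<Rightarrow> (nat \<Rightarrow> bool) \<Rightarrow> stp" where
  "Lop n C Ps v = foldr (\<lambda>j acc. if v j then st_mult (Gop n C (Ps j) (meas_level C j)) acc else acc)
      [0..<nmeas C] st_one"

definition comm_space :: "nat \<Rightarrow> cop list \<Rightarrow> nat \<Rightarrow> pv set" where
  "comm_space n C l = {P. pv_valid n P \<and>
      (\<forall>j<nmeas C. meas_level C j = l \<longrightarrow> pv_commute n P (meas_pauli C j))}"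

inductive_set gf2_span :: "('a \<Rightarrow> 'a \<Rightarrow> 'a) \<Rightarrow> 'a \<Rightarrow> 'a set \<Rightarrow> 'a set"
  for gmul :: "'a \<Rightarrow> 'a \<Rightarrow> 'a" and gone :: 'a and S :: "'a set" where
  span_one: "gone \<in> gf2_span gmul gone S"
| span_step: "x \<in> S \<Longrightarrow> y \<in> gf2_span gmul gone S \<Longrightarrow> gmul x y \<in> gf2_span gmul gone S"

definition is_basis :: "('a \<Rightarrow> 'a \<Rightarrow> 'a) \<Rightarrow> 'a \<Rightarrow> 'a set \<Rightarrow> 'a set \<Rightarrow> bool" where
  "is_basis gmul gone V B \<longleftrightarrow> B \<subseteq> V \<and> gf2_span gmul gone B = V \<and>
     (\<forall>b\<in>B. b \<notin> gf2_span gmul gone (B - {b}))"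

end

(* Whether a spacetime Pauli F commutes with a back-cumulant is decided level by level by the
   symplectic form.  Conjugation by a Clifford unitary preserves that form, so G(P,l) pairs with
   the back-cumulant of a fault H exactly as P pairs with the component of H at level l - 1/2,
   and eta_{Delta+1/2}(P) as P pairs with the top component.  For H = F(u) the component at
   level l - 1/2 is the product of the operators S_j measured at level l with u_j = 1; hence
   the generators of types (i) and (ii) commute with every back-cumulated F(u), and L(v) pairs
   with F(u) through the dot product (v|u), because P_j anticommutes with S_j and with no other
   operator measured at its level.  So all generators lie in the commutant.

   Conversely, multiplying by operators G(P,l) clears any spacetime Pauli level by level from
   the bottom, and G(P,l) differs from a product of type (ii) generators by some L(v).  Thus a
   member F of the commutant is X L(v) with X generated by (i) and (ii); then L(v) is in the
   commutant too, which says v is orthogonal to the dual of the outcome code, so v lies in the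
   code and L(v) is generated by (iii). *)

theory Submission
  imports Defs
begin

definition parity :: "'a set \<Rightarrow> ('a \<Rightarrow> bool) \<Rightarrow> bool" where
  "parity A P \<longleftrightarrow> odd (card {x\<in>A. P x})"

lemma parity_empty [simp]: "parity {} P = False"
  by (simp add: parity_def)

lemma parity_False [simp]: "parity A (\<lambda>_. False) = False"
  by (simp add: parity_def)

lemma parity_insert:
  assumes "finite A" "x \<notin> A"
  shows "parity (insert x A) P = (P x \<noteq> parity A P)"
proof (cases "P x")
  case True
  then have "{y\<in>insert x A. P y} = insert x {y\<in>A. P y}" by auto
  then show ?thesis using assms True by (simp add: parity_def)
next
  case False
  then have "{y\<in>insert x A. P y} = {y\<in>A. P y}" by auto
  then show ?thesis using False by (simp add: parity_def)
qed

lemma parity_xor: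
  assumes "finite A"
  shows "parity A (\<lambda>x. P x \<noteq> Q x) = (parity A P \<noteq> parity A Q)"
  using assms by (induction A rule: finite_induct) (auto simp: parity_insert)

lemma parity_cong: "(\<And>x. x \<in> A \<Longrightarrow> P x = Q x) \<Longrightarrow> parity A P = parity A Q"
  unfolding parity_def by (metis (mono_tags, lifting) Collect_cong)

lemma parity_lessThan_Suc: "parity {..<Suc m} P = (P m \<noteq> parity {..<m} P)"
  by (simp add: lessThan_Suc parity_insert)

lemma parity_singleton:
  assumes "finite A" "\<And>x. x \<in> A \<Longrightarrow> P x \<Longrightarrow> x = a"
  shows "parity A P = (a \<in> A \<and> P a)"
proof -
  have "{x\<in>A. P x} = (if a \<in> A \<and> P a then {a} else {})" using assms(2) by auto
  then show ?thesis by (simp add: parity_def)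
qed

lemma parity_Times:
  assumes "finite A" "finite B"
  shows "parity (A \<times> B) (\<lambda>(x, y). P x y) = parity A (\<lambda>x. parity B (P x))"
  using assms
proof (induction A rule: finite_induct)
  case (insert x A)
  let ?R = "{z \<in> A \<times> B. (\<lambda>(x, y). P x y) z}"
  have split: "{z \<in> insert x A \<times> B. (\<lambda>(x, y). P x y) z} = Pair x ` {y\<in>B. P x y} \<union> ?R"
    by auto
  have "card (Pair x ` {y\<in>B. P x y} \<union> ?R) = card {y\<in>B. P x y} + card ?R"
    using insert by (subst card_Un_disjoint) (auto simp: card_image inj_on_def)
  then have "parity (insert x A \<times> B) (\<lambda>(x, y). P x y) = (parity B (P x) \<noteq> parity (A \<times> B) (\<lambda>(x, y). P x y))"
    by (simp add: parity_def split)
  then show ?case using insert by (simp add: parity_insert)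
qed simp

lemma prod_sign_parity:
  "(\<Prod>q<(n::nat). if A q then -1 else 1 :: complex) = (if parity {..<n} A then -1 else 1)"
  by (induction n) (auto simp: prod.lessThan_Suc parity_lessThan_Suc)

lemma bit_nat_less_exp: "(k::nat) < 2 ^ n \<Longrightarrow> n \<le> q \<Longrightarrow> \<not> bit k q"
  by (metis bit_take_bit_iff take_bit_nat_eq_self_iff not_less)

lemma bit_exp_add_nat:
  assumes "(k::nat) < 2 ^ n"
  shows "bit (2 ^ n + k) q = (q = n \<or> bit k q)"
proof -
  have "2 ^ n + k = or (2 ^ n) k"
    by (rule disjunctive_add_eq_or, rule bit_eqI)
       (use assms bit_nat_less_exp in \<open>auto simp: bit_and_iff bit_exp_iff\<close>)
  then show ?thesis using bit_nat_less_exp[OF assms, of n] by (auto simp: bit_or_iff bit_exp_iff)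
qed

lemma nat_eq_iff_low_bits_eq:
  "(i::nat) < 2 ^ n \<Longrightarrow> j < 2 ^ n \<Longrightarrow> (\<forall>q<n. bit i q = bit j q) \<longleftrightarrow> i = j"
  by (metis bit_eqI bit_nat_less_exp not_less)

lemma sum_prod_bits:
  fixes f :: "nat \<Rightarrow> bool \<Rightarrow> 'a::comm_semiring_1"
  shows "(\<Sum>(k::nat)<2 ^ n. \<Prod>q<n. f q (bit k q)) = (\<Prod>q<n. f q False + f q True)"
proof (induction n)
  case (Suc n)
  let ?S = "\<lambda>k. \<Prod>q<n. f q (bit k q)"
  have split: "{..<2 ^ Suc n} = {..<2 ^ n} \<union> (\<lambda>k. 2 ^ n + k) ` {..<(2::nat) ^ n}"
  proof -
    have "x \<in> (\<lambda>k. 2 ^ n + k) ` {..<2 ^ n}" if "x < 2 ^ Suc n" "\<not> x < 2 ^ n" for x :: nat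
      using that by (intro image_eqI[of _ _ "x - 2 ^ n"]) auto
    then show ?thesis by auto
  qed
  have inj: "inj_on (\<lambda>k. 2 ^ n + k) {..<(2::nat) ^ n}" by (auto simp: inj_on_def)
  have low: "(\<Prod>q<Suc n. f q (bit k q)) = f n False * ?S k" if "k < 2 ^ n" for k :: nat
    using bit_nat_less_exp[OF that, of n] by (simp add: prod.lessThan_Suc mult.commute)
  have high: "(\<Prod>q<Suc n. f q (bit (2 ^ n + k) q)) = f n True * ?S k" if "k < 2 ^ n" for k :: nat
  proof -
    have "(\<Prod>q<n. f q (bit (2 ^ n + k) q)) = ?S k"
      by (rule prod.cong) (auto simp: bit_exp_add_nat[OF that])
    then show ?thesis by (simp add: prod.lessThan_Suc bit_exp_add_nat[OF that] mult.commute)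
  qed
  have "(\<Sum>(k::nat)<2 ^ Suc n. \<Prod>q<Suc n. f q (bit k q))
      = (\<Sum>(k::nat)<2 ^ n. \<Prod>q<Suc n. f q (bit k q)) + (\<Sum>(k::nat)<2 ^ n. \<Prod>q<Suc n. f q (bit (2 ^ n + k) q))"
    unfolding split by (subst sum.union_disjoint) (auto simp: sum.reindex[OF inj])
  also have "\<dots> = (f n False + f n True) * (\<Sum>(k::nat)<2 ^ n. ?S k)"
    using low high by (simp add: sum_distrib_left distrib_right sum.distrib)
  also have "\<dots> = (\<Prod>q<Suc n. f q False + f q True)"
    using Suc.IH by (simp add: prod.lessThan_Suc mult.commute)
  finally show ?case .
qed simp

lemma gf2_span_superset:
  assumes "\<And>x. gmul x gone = x"
  shows "S \<subseteq> gf2_span gmul gone S"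
  using gf2_span.span_step[OF _ gf2_span.span_one[where gmul = gmul and gone = gone and S = S]] assms
  by auto

lemma gf2_span_mult:
  assumes "\<And>x. gmul gone x = x" "\<And>x y z. gmul (gmul x y) z = gmul x (gmul y z)"
    and "x \<in> gf2_span gmul gone S" "y \<in> gf2_span gmul gone S"
  shows "gmul x y \<in> gf2_span gmul gone S"
  using assms(3)
proof (induction rule: gf2_span.induct)
  case span_one
  then show ?case using assms(1,4) by simp
next
  case (span_step a b)
  then show ?case using assms(2) by (metis gf2_span.span_step)
qed

lemma gf2_span_mono: "S \<subseteq> T \<Longrightarrow> x \<in> gf2_span gmul gone S \<Longrightarrow> x \<in> gf2_span gmul gone T"
  by (erule gf2_span.induct) (auto intro: gf2_span.intros)

lemma gf2_span_hom:
  assumes "x \<in> gf2_span gmul gone S" and "S \<subseteq> V" "gone \<in> V"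
    and "\<And>a b. a \<in> V \<Longrightarrow> b \<in> V \<Longrightarrow> gmul a b \<in> V"
    and "\<And>a b. a \<in> V \<Longrightarrow> b \<in> V \<Longrightarrow> h (gmul a b) = gmul' (h a) (h b)"
    and "h gone = gone'"
  shows "h x \<in> gf2_span gmul' gone' (h ` S)"
proof -
  have "x \<in> V \<and> h x \<in> gf2_span gmul' gone' (h ` S)"
    using assms(1)
  proof (induction rule: gf2_span.induct)
    case (span_step a b)
    then have "a \<in> V" using assms(2) by auto
    then show ?case using span_step assms(4,5) by (auto intro: gf2_span.span_step)
  qed (use assms(3,6) in \<open>simp add: gf2_span.span_one\<close>)
  then show ?thesis ..
qed

section \<open>The outcome code and its dual\<close>

definition bs_dot :: "nat \<Rightarrow> (nat \<Rightarrow> bool) \<Rightarrow> (nat \<Rightarrow> bool) \<Rightarrow> bool" where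
  "bs_dot m u w = parity {..<m} (\<lambda>j. u j \<and> w j)"

lemma bs_dot_commute: "bs_dot m u w = bs_dot m w u"
  unfolding bs_dot_def by (rule parity_cong) auto

lemma bs_dot_xor: "bs_dot m u (bs_xor a b) = (bs_dot m u a \<noteq> bs_dot m u b)"
proof -
  have "bs_dot m u (bs_xor a b) = parity {..<m} (\<lambda>j. (u j \<and> a j) \<noteq> (u j \<and> b j))"
    unfolding bs_dot_def by (rule parity_cong) (auto simp: bs_xor_def)
  then show ?thesis
    using parity_xor[of "{..<m}" "\<lambda>j. u j \<and> a j" "\<lambda>j. u j \<and> b j"] by (simp add: bs_dot_def)
qed

lemma bs_dot_Suc: "bs_dot (Suc m) u w = ((u m \<and> w m) \<noteq> bs_dot m u w)"
  by (simp add: bs_dot_def parity_lessThan_Suc)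

lemma bs_perp_eq: "bs_perp m Oc = {u. bs_valid m u \<and> (\<forall>w\<in>Oc. \<not> bs_dot m u w)}"
proof -
  have "{j. j < m \<and> u j \<and> w j} = {j\<in>{..<m}. u j \<and> w j}" for u w by auto
  then show ?thesis by (simp add: bs_perp_def bs_dot_def parity_def)
qed

lemma bs_xor_zero [simp]: "bs_xor w bs_zero = w"
  by (simp add: bs_xor_def bs_zero_def)

lemma bs_valid_zero [simp]: "bs_valid m bs_zero"
  by (simp add: bs_valid_def bs_zero_def)

lemma bs_valid_xor: "bs_valid m a \<Longrightarrow> bs_valid m b \<Longrightarrow> bs_valid m (bs_xor a b)"
  by (simp add: bs_valid_def bs_xor_def)

lemma bs_dot_update_last: "bs_dot (Suc m) (u(m := c)) w = ((c \<and> w m) \<noteq> bs_dot m u w)"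
proof -
  have "bs_dot m (u(m := c)) w = bs_dot m u w" unfolding bs_dot_def by (rule parity_cong) auto
  then show ?thesis by (simp add: bs_dot_Suc)
qed

text \<open>A dual word of the subcode avoiding coordinate m extends to a dual word of the whole
  code once its value at m is chosen to cancel its pairing with a codeword w0 using m.\<close>
lemma dual_word_extend:
  assumes lin: "linear_code Oc" and w0: "w0 \<in> Oc" "w0 m"
    and u: "\<forall>w\<in>Oc. \<not> w m \<longrightarrow> \<not> bs_dot m u w"
  shows "\<forall>w\<in>Oc. \<not> bs_dot (Suc m) (u(m := bs_dot m u w0)) w"
    and "bs_dot (Suc m) (u(m := bs_dot m u w0)) v = bs_dot m u (if v m then bs_xor v w0 else v)"
proof -
  show "\<forall>w\<in>Oc. \<not> bs_dot (Suc m) (u(m := bs_dot m u w0)) w"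
  proof
    fix w assume w: "w \<in> Oc"
    show "\<not> bs_dot (Suc m) (u(m := bs_dot m u w0)) w"
    proof (cases "w m")
      case True
      then have "bs_xor w w0 \<in> Oc" "\<not> bs_xor w w0 m"
        using lin w w0 by (auto simp: linear_code_def bs_xor_def)
      then have "bs_dot m u w = bs_dot m u w0" using u by (auto simp: bs_dot_xor)
      then show ?thesis using True by (simp add: bs_dot_update_last)
    qed (use u w in \<open>simp add: bs_dot_update_last\<close>)
  qed
  show "bs_dot (Suc m) (u(m := bs_dot m u w0)) v = bs_dot m u (if v m then bs_xor v w0 else v)"
    by (auto simp: bs_dot_update_last bs_dot_xor)
qed

lemma exists_dual_word_detecting:
  assumes "Oc \<subseteq> {w. bs_valid m w}" "linear_code Oc" "bs_valid m v" "v \<notin> Oc"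
  shows "\<exists>u. bs_valid m u \<and> (\<forall>w\<in>Oc. \<not> bs_dot m u w) \<and> bs_dot m u v"
  using assms
proof (induction m arbitrary: Oc v)
  case 0
  then have "v = bs_zero" by (auto simp: bs_valid_def bs_zero_def)
  then show ?case using "0.prems"(2,4) by (simp add: linear_code_def)
next
  case (Suc m)
  note valid = Suc.prems(1) and lin = Suc.prems(2)
  have shorter: "bs_valid m w" if "bs_valid (Suc m) w" "\<not> w m" for w
    using that unfolding bs_valid_def by (metis Suc_le_eq le_neq_implies_less)
  show ?case
  proof (cases "\<exists>w0\<in>Oc. w0 m")
    case False
    show ?thesis
    proof (cases "v m")
      case True
      have "bs_dot (Suc m) (\<lambda>j. j = m) w = w m" for w
        unfolding bs_dot_def by (subst parity_singleton[of _ _ m]) auto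
      then show ?thesis using False True by (intro exI[of _ "\<lambda>j. j = m"]) (auto simp: bs_valid_def)
    next
      case vm: False
      have "Oc \<subseteq> {w. bs_valid m w}" using False valid shorter by blast
      from Suc.IH[OF this lin shorter[OF Suc.prems(3) vm] Suc.prems(4)]
      obtain u where u: "bs_valid m u" "\<forall>w\<in>Oc. \<not> bs_dot m u w" "bs_dot m u v" by blast
      then have "\<not> u m" by (simp add: bs_valid_def)
      then show ?thesis using u by (intro exI[of _ u]) (auto simp: bs_dot_Suc bs_valid_def)
    qed
  next
    case True
    then obtain w0 where w0: "w0 \<in> Oc" "w0 m" by blast
    let ?Oc' = "{w\<in>Oc. \<not> w m}"
    define v' where "v' = (if v m then bs_xor v w0 else v)"
    have "bs_xor (bs_xor v w0) w0 = v" by (auto simp: bs_xor_def)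
    then have "v' \<notin> ?Oc'"
      using lin Suc.prems(4) w0(1) by (cases "v m") (auto simp: v'_def linear_code_def, metis)
    moreover have "bs_valid m v'"
    proof (rule shorter)
      show "bs_valid (Suc m) v'" using valid Suc.prems(3) w0 by (auto simp: v'_def bs_valid_def bs_xor_def)
      show "\<not> v' m" using w0(2) by (auto simp: v'_def bs_xor_def)
    qed
    moreover have "?Oc' \<subseteq> {w. bs_valid m w}" using valid shorter by blast
    moreover have "linear_code ?Oc'" using lin by (auto simp: linear_code_def bs_zero_def bs_xor_def)
    ultimately obtain u where u: "bs_valid m u" "\<forall>w\<in>?Oc'. \<not> bs_dot m u w" "bs_dot m u v'"
      using Suc.IH by blast
    then have "\<forall>w\<in>Oc. \<not> w m \<longrightarrow> \<not> bs_dot m u w" by blast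
    note extend = dual_word_extend[OF lin w0 this]
    have "bs_valid (Suc m) (u(m := bs_dot m u w0))" using u(1) by (auto simp: bs_valid_def)
    then show ?thesis using extend u(3) unfolding v'_def by blast
  qed
qed

lemma bs_perp_perp_subset:
  assumes "Oc \<subseteq> {w. bs_valid m w}" "linear_code Oc"
  shows "bs_perp m (bs_perp m Oc) \<subseteq> Oc"
proof
  fix v assume "v \<in> bs_perp m (bs_perp m Oc)"
  then have "bs_valid m v" "\<And>u. u \<in> bs_perp m Oc \<Longrightarrow> \<not> bs_dot m u v"
    by (auto simp: bs_perp_eq bs_dot_commute)
  then show "v \<in> Oc"
    using exists_dual_word_detecting[OF assms] by (fastforce simp: bs_perp_eq)
qed

definition sigma_phase :: "bool \<times> bool \<Rightarrow> bool \<times> bool \<Rightarrow> complex" where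
  "sigma_phase a c =
     (if a = (True, False) \<and> c = (False, True) then - \<i>
      else if a = (False, True) \<and> c = (True, False) then \<i>
      else if a = (True, False) \<and> c = (True, True) then \<i>
      else if a = (True, True) \<and> c = (True, False) then - \<i>
      else if a = (False, True) \<and> c = (True, True) then - \<i>
      else if a = (True, True) \<and> c = (False, True) then \<i> else 1)"

lemma sigma_mult:
  "sigma a x False * sigma c False y + sigma a x True * sigma c True y
     = sigma_phase a c * sigma (fst a \<noteq> fst c, snd a \<noteq> snd c) x y"
  by (cases a; cases c; cases x; cases y) (auto simp: sigma_def sigma_phase_def)

lemma sigma_phase_swap:
  "sigma_phase a c = (if (fst a \<and> snd c) \<noteq> (snd a \<and> fst c) then -1 else 1) * sigma_phase c a"
proof -
  obtain a1 a2 c1 c2 where "a = (a1, a2)" "c = (c1, c2)" by (cases a, cases c)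
  then show ?thesis by (cases a1; cases a2; cases c1; cases c2) (simp_all add: sigma_phase_def)
qed

lemma sigma_phase_nonzero: "sigma_phase a c \<noteq> 0"
  by (auto simp: sigma_phase_def)

lemma sigma_phase_self: "sigma_phase a a = 1"
  by (auto simp: sigma_phase_def)

definition pauli_phase :: "nat \<Rightarrow> pv \<Rightarrow> pv \<Rightarrow> complex" where
  "pauli_phase n p r = (\<Prod>q<n. sigma_phase (p q) (r q))"

lemma pauli_phase_nonzero: "pauli_phase n p r \<noteq> 0"
  by (simp add: pauli_phase_def sigma_phase_nonzero)

lemma pauli_phase_self: "pauli_phase n p p = 1"
  by (simp add: pauli_phase_def sigma_phase_self)

lemma pmat_carrier [simp]: "pmat n p \<in> carrier_mat (2 ^ n) (2 ^ n)"
  and pmat_dim [simp]: "dim_row (pmat n p) = 2 ^ n" "dim_col (pmat n p) = 2 ^ n"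
  by (simp_all add: pmat_def)

lemma pmat_index:
  "i < 2 ^ n \<Longrightarrow> j < 2 ^ n \<Longrightarrow> pmat n p $$ (i, j) = (\<Prod>q<n. sigma (p q) (bit i q) (bit j q))"
  by (simp add: pmat_def)

lemma pmat_mult: "pmat n p * pmat n r = pauli_phase n p r \<cdot>\<^sub>m pmat n (pv_mult p r)"
proof (rule eq_matI)
  fix i j assume "i < dim_row (pauli_phase n p r \<cdot>\<^sub>m pmat n (pv_mult p r))"
    and "j < dim_col (pauli_phase n p r \<cdot>\<^sub>m pmat n (pv_mult p r))"
  then have i: "i < 2 ^ n" and j: "j < 2 ^ n" by auto
  have "(pmat n p * pmat n r) $$ (i, j)
      = (\<Sum>(k::nat)<2 ^ n. \<Prod>q<n. sigma (p q) (bit i q) (bit k q) * sigma (r q) (bit k q) (bit j q))"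
    using i j by (auto simp: scalar_prod_def pmat_index prod.distrib atLeast0LessThan intro!: sum.cong)
  also have "\<dots> = (\<Prod>q<n. sigma (p q) (bit i q) False * sigma (r q) False (bit j q)
                          + sigma (p q) (bit i q) True * sigma (r q) True (bit j q))"
    by (rule sum_prod_bits)
  also have "\<dots> = (pauli_phase n p r \<cdot>\<^sub>m pmat n (pv_mult p r)) $$ (i, j)"
    using i j by (simp add: sigma_mult pmat_index pauli_phase_def prod.distrib pv_mult_def)
  finally show "(pmat n p * pmat n r) $$ (i, j) = (pauli_phase n p r \<cdot>\<^sub>m pmat n (pv_mult p r)) $$ (i, j)" .
qed auto

lemma pmat_one: "pmat n pv_one = 1\<^sub>m (2 ^ n)"
proof (rule eq_matI)
  fix i j assume "i < dim_row (1\<^sub>m (2 ^ n) :: complex mat)" "j < dim_col (1\<^sub>m (2 ^ n) :: complex mat)"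
  then have i: "i < 2 ^ n" and j: "j < 2 ^ n" by auto
  have "pmat n pv_one $$ (i, j) = (\<Prod>q<n. if bit i q = bit j q then 1 else 0)"
    using i j by (simp add: pmat_index pv_one_def sigma_def)
  also have "\<dots> = (if \<forall>q<n. bit i q = bit j q then 1 else 0)"
    by (induction n) (auto simp: prod.lessThan_Suc less_Suc_eq)
  finally show "pmat n pv_one $$ (i, j) = 1\<^sub>m (2 ^ n) $$ (i, j)"
    using i j nat_eq_iff_low_bits_eq[OF i j] by simp
qed auto

lemma pv_mult_self [simp]: "pv_mult p p = pv_one"
  by (simp add: pv_mult_def pv_one_def)

lemma pv_mult_commute: "pv_mult p r = pv_mult r p"
  by (auto simp: pv_mult_def)

lemma pv_mult_assoc: "pv_mult (pv_mult p r) t = pv_mult p (pv_mult r t)"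
  by (auto simp: pv_mult_def)

lemma pv_mult_one [simp]: "pv_mult pv_one p = p" "pv_mult p pv_one = p"
  by (auto simp: pv_mult_def pv_one_def)

lemma pv_mult_eq_one_iff: "pv_mult p r = pv_one \<longleftrightarrow> p = r"
  by (auto simp: pv_mult_def pv_one_def fun_eq_iff prod_eq_iff)

lemma pv_valid_mult: "pv_valid n p \<Longrightarrow> pv_valid n r \<Longrightarrow> pv_valid n (pv_mult p r)"
  by (simp add: pv_valid_def pv_mult_def)

lemma pv_valid_one [simp]: "pv_valid n pv_one"
  by (simp add: pv_valid_def pv_one_def)

lemma finite_pv_valid: "finite {p. pv_valid n p}"
proof -
  have "{p. pv_valid n p} = {f. \<forall>x. (x \<in> {..<n} \<longrightarrow> f x \<in> UNIV) \<and> (x \<notin> {..<n} \<longrightarrow> f x = (False, False))}"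
    by (auto simp: pv_valid_def)
  also have "finite \<dots>" by (rule finite_set_of_finite_funs) auto
  finally show ?thesis .
qed

lemma smult_one_mat [simp]: "(1::'a::semiring_1) \<cdot>\<^sub>m A = A"
  by (rule eq_matI) auto

lemma smult_smult_mat: "a \<cdot>\<^sub>m (b \<cdot>\<^sub>m A) = (a * b :: 'a::semigroup_mult) \<cdot>\<^sub>m A"
  by (rule eq_matI) (auto simp: mult.assoc)

lemma smult_pmat_mult:
  "(c \<cdot>\<^sub>m pmat n p) * (d \<cdot>\<^sub>m pmat n r) = (c * d * pauli_phase n p r) \<cdot>\<^sub>m pmat n (pv_mult p r)"
proof -
  have "(c \<cdot>\<^sub>m pmat n p) * (d \<cdot>\<^sub>m pmat n r) = c \<cdot>\<^sub>m (pmat n p * (d \<cdot>\<^sub>m pmat n r))"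
    by (rule mult_smult_assoc_mat) auto
  also have "\<dots> = c \<cdot>\<^sub>m (d \<cdot>\<^sub>m (pmat n p * pmat n r))"
    by (subst mult_smult_distrib) auto
  finally show ?thesis by (simp add: pmat_mult smult_smult_mat mult.assoc)
qed

lemma pmat_square: "pmat n p * pmat n p = 1\<^sub>m (2 ^ n)"
  by (simp add: pmat_mult pauli_phase_self pmat_one)

lemma smult_pmat_cancel:
  assumes "c \<cdot>\<^sub>m pmat n p = d \<cdot>\<^sub>m pmat n p"
  shows "c = d"
proof -
  have "(c \<cdot>\<^sub>m pmat n p) * pmat n p = (d \<cdot>\<^sub>m pmat n p) * pmat n p" using assms by simp
  then have "c \<cdot>\<^sub>m 1\<^sub>m (2 ^ n) = d \<cdot>\<^sub>m (1\<^sub>m (2 ^ n) :: complex mat)"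
    by (simp add: mult_smult_assoc_mat[of _ "2 ^ n" "2 ^ n" _ "2 ^ n"] pmat_square)
  then have "(c \<cdot>\<^sub>m 1\<^sub>m (2 ^ n)) $$ (0, 0) = (d \<cdot>\<^sub>m (1\<^sub>m (2 ^ n) :: complex mat)) $$ (0, 0)" by simp
  then show ?thesis by simp
qed

text \<open>The diagonal entry (0,0) rules out X and Y factors, and then the entry
  (2^q,2^q) rules out a Z factor at qubit q.\<close>
lemma pmat_scalar_imp_one:
  assumes valid: "pv_valid n t" and scalar: "pmat n t = k \<cdot>\<^sub>m 1\<^sub>m (2 ^ n)"
  shows "t = pv_one"
proof -
  have "1\<^sub>m (2 ^ n) = (k \<cdot>\<^sub>m 1\<^sub>m (2 ^ n)) * (k \<cdot>\<^sub>m 1\<^sub>m (2 ^ n) :: complex mat)"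
    using pmat_square[of n t] by (simp add: scalar)
  also have "\<dots> = k \<cdot>\<^sub>m (k \<cdot>\<^sub>m 1\<^sub>m (2 ^ n))"
    by (subst mult_smult_assoc_mat[of _ "2 ^ n" "2 ^ n"]) auto
  finally have "(1\<^sub>m (2 ^ n) :: complex mat) $$ (0, 0) = (k \<cdot>\<^sub>m (k \<cdot>\<^sub>m 1\<^sub>m (2 ^ n))) $$ (0, 0)"
    by simp
  then have "k * k = 1" by simp
  then have "k \<noteq> 0" by auto
  have diag: "pmat n t $$ (i, i) = k" if "i < 2 ^ n" for i
    using scalar that by simp
  have no_x: "\<not> fst (t q)" if q: "q < n" for q
  proof
    assume "fst (t q)"
    then have "sigma (t q) False False = 0" by (auto simp: sigma_def)
    then have "pmat n t $$ (0, 0) = 0" using q by (auto simp: pmat_index intro!: prod_zero)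
    then show False using diag[of 0] \<open>k \<noteq> 0\<close> by simp
  qed
  have sigma_diag: "sigma (t q) b b = (if snd (t q) \<and> b then -1 else 1)" if "q < n" for q b
    using no_x[OF that] by (cases "t q") (auto simp: sigma_def)
  have no_z: "\<not> snd (t q)" if q: "q < n" for q
  proof
    assume z: "snd (t q)"
    have "pmat n t $$ (0, 0) = 1" by (simp add: pmat_index sigma_diag)
    moreover have "pmat n t $$ (2 ^ q, 2 ^ q) = (\<Prod>q'<n. if q' = q then -1 else 1)"
    proof -
      have "(2::nat) ^ q < 2 ^ n" using q by simp
      then have "pmat n t $$ (2 ^ q, 2 ^ q) = (\<Prod>q'<n. sigma (t q') (bit ((2::nat) ^ q) q') (bit ((2::nat) ^ q) q'))"
        by (simp add: pmat_index)
      also have "\<dots> = (\<Prod>q'<n. if q' = q then -1 else 1)"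
        by (rule prod.cong) (auto simp: sigma_diag bit_exp_iff z)
      finally show ?thesis .
    qed
    ultimately have "pmat n t $$ (2 ^ q, 2 ^ q) \<noteq> pmat n t $$ (0, 0)"
      using q by (simp add: prod.If_cases)
    then show False using q diag[of 0] diag[of "2 ^ q"] by simp
  qed
  show ?thesis
  proof
    fix q show "t q = pv_one q"
      using valid no_x[of q] no_z[of q] by (cases "q < n"; cases "t q") (auto simp: pv_valid_def pv_one_def)
  qed
qed

lemma pmat_inj:
  assumes "pv_valid n p" "pv_valid n r" "c \<noteq> 0"
    and eq: "c \<cdot>\<^sub>m pmat n p = d \<cdot>\<^sub>m pmat n r"
  shows "p = r"
proof -
  have "(c \<cdot>\<^sub>m pmat n p) * (1 \<cdot>\<^sub>m pmat n r) = (d \<cdot>\<^sub>m pmat n r) * pmat n r" using eq by simp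
  then have "(c * pauli_phase n p r) \<cdot>\<^sub>m pmat n (pv_mult p r) = d \<cdot>\<^sub>m 1\<^sub>m (2 ^ n)"
    by (simp only: smult_pmat_mult mult_smult_assoc_mat[of _ "2 ^ n" "2 ^ n" _ "2 ^ n"] pmat_carrier pmat_square)
      simp
  then have "(1 / (c * pauli_phase n p r)) \<cdot>\<^sub>m ((c * pauli_phase n p r) \<cdot>\<^sub>m pmat n (pv_mult p r))
           = (1 / (c * pauli_phase n p r)) \<cdot>\<^sub>m (d \<cdot>\<^sub>m 1\<^sub>m (2 ^ n))" by simp
  then have "pmat n (pv_mult p r) = (d / (c * pauli_phase n p r)) \<cdot>\<^sub>m 1\<^sub>m (2 ^ n)"
    using \<open>c \<noteq> 0\<close> pauli_phase_nonzero[of n p r] by (simp add: smult_smult_mat)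
  then have "pv_mult p r = pv_one" by (rule pmat_scalar_imp_one[OF pv_valid_mult[OF assms(1,2)]])
  then show ?thesis by (simp add: pv_mult_eq_one_iff)
qed

definition pv_symp :: "nat \<Rightarrow> pv \<Rightarrow> pv \<Rightarrow> bool" where
  "pv_symp n p r = parity {..<n} (pv_anticomm_at p r)"

lemma pv_commute_iff_not_symp: "pv_commute n p r \<longleftrightarrow> \<not> pv_symp n p r"
proof -
  have "{q. q < n \<and> pv_anticomm_at p r q} = {q\<in>{..<n}. pv_anticomm_at p r q}" by auto
  then show ?thesis by (simp add: pv_commute_def pv_symp_def parity_def)
qed

lemma pv_symp_commute: "pv_symp n p r = pv_symp n r p"
  unfolding pv_symp_def by (rule parity_cong) (auto simp: pv_anticomm_at_def)

lemma pv_symp_mult_left: "pv_symp n (pv_mult p p') r = (pv_symp n p r \<noteq> pv_symp n p' r)"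
proof -
  have "pv_symp n (pv_mult p p') r = parity {..<n} (\<lambda>q. pv_anticomm_at p r q \<noteq> pv_anticomm_at p' r q)"
    unfolding pv_symp_def by (rule parity_cong) (auto simp: pv_anticomm_at_def pv_mult_def)
  then show ?thesis
    using parity_xor[of "{..<n}" "pv_anticomm_at p r" "pv_anticomm_at p' r"] by (simp add: pv_symp_def)
qed

lemma pv_symp_mult_right: "pv_symp n r (pv_mult p p') = (pv_symp n r p \<noteq> pv_symp n r p')"
  using pv_symp_mult_left pv_symp_commute by metis

lemma pv_symp_one [simp]: "pv_symp n pv_one r = False" "pv_symp n r pv_one = False"
  by (simp_all add: pv_symp_def pv_anticomm_at_def pv_one_def parity_def)

lemma pv_symp_disjoint_supp:
  assumes "pv_supp p \<inter> pv_supp r = {}"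
  shows "\<not> pv_symp n p r"
proof -
  have "\<not> pv_anticomm_at p r q" for q
    using assms by (cases "p q = (False, False)") (auto simp: pv_supp_def pv_anticomm_at_def)
  then show ?thesis by (simp add: pv_symp_def parity_def)
qed

lemma pauli_phase_swap: "pauli_phase n p r = (if pv_symp n p r then -1 else 1) * pauli_phase n r p"
proof -
  have "pauli_phase n p r = (\<Prod>q<n. (if pv_anticomm_at p r q then -1 else 1) * sigma_phase (r q) (p q))"
    unfolding pauli_phase_def pv_anticomm_at_def by (rule prod.cong) (auto simp: sigma_phase_swap[of "p _"])
  then show ?thesis by (simp add: prod.distrib pauli_phase_def prod_sign_parity pv_symp_def)
qed

section \<open>Conjugation by Clifford unitaries\<close>

definition clifford_unitary :: "nat \<Rightarrow> complex mat \<Rightarrow> bool" where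
  "clifford_unitary n U \<longleftrightarrow> unitary_n n U \<and> clifford_n n U"

lemma adj_carrier: "U \<in> carrier_mat a b \<Longrightarrow> adj U \<in> carrier_mat b a"
  by (simp add: adj_def)

lemma adj_adj [simp]: "adj (adj U) = U"
  by (rule eq_matI) (auto simp: adj_def)

lemma adj_mult:
  assumes "A \<in> carrier_mat a b" "B \<in> carrier_mat b c"
  shows "adj (A * B) = adj B * adj A"
proof (rule eq_matI)
  fix i j assume "i < dim_row (adj B * adj A)" "j < dim_col (adj B * adj A)"
  then show "adj (A * B) $$ (i, j) = (adj B * adj A) $$ (i, j)"
    using assms by (auto simp: adj_def scalar_prod_def intro: sum.cong)
qed (use assms in \<open>auto simp: adj_def\<close>)

lemma adj_one [simp]: "adj (1\<^sub>m N) = (1\<^sub>m N :: complex mat)"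
  by (rule eq_matI) (auto simp: adj_def)

lemma smult_eq_iff_eq_inverse_smult:
  "(a::'a::field) \<noteq> 0 \<Longrightarrow> a \<cdot>\<^sub>m A = B \<longleftrightarrow> A = (1 / a) \<cdot>\<^sub>m B"
  by (auto simp: smult_smult_mat)

lemma smult_sandwich:
  fixes U V M :: "'a::comm_semiring_0 mat"
  assumes "U \<in> carrier_mat N N" "V \<in> carrier_mat N N" "M \<in> carrier_mat N N"
  shows "U * (s \<cdot>\<^sub>m M) * V = s \<cdot>\<^sub>m (U * M * V)"
  using assms by (simp add: mult_smult_distrib[of _ N N] mult_smult_assoc_mat[of _ N N])

context
  fixes U :: "complex mat" and N :: nat
  assumes U: "U \<in> carrier_mat N N" and unitary: "adj U * U = 1\<^sub>m N"
begin

lemma unitary_sandwich_inverse: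
  assumes "M \<in> carrier_mat N N"
  shows "adj U * (U * M * adj U) * U = M"
proof -
  have "adj U * (U * M * adj U) * U = (adj U * U) * M * (adj U * U)"
    using U assms adj_carrier[OF U] by (simp add: assoc_mult_mat[of _ N N _ N _ N])
  then show ?thesis using unitary assms by simp
qed

lemma unitary_sandwich_mult:
  assumes "A \<in> carrier_mat N N" "B \<in> carrier_mat N N"
  shows "(U * A * adj U) * (U * B * adj U) = U * (A * B) * adj U"
proof -
  have "(U * A * adj U) * (U * B * adj U) = U * A * (adj U * U) * B * adj U"
    using U assms adj_carrier[OF U] by (simp add: assoc_mult_mat[of _ N N _ N _ N])
  then show ?thesis using U assms adj_carrier[OF U] unitary by (simp add: assoc_mult_mat[of _ N N _ N _ N])
qed

end

lemma conj_pv_eqI: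
  assumes "pv_valid n p" "pv_valid n r" "c \<noteq> 0"
    and eq: "V * pmat n p * adj V = c \<cdot>\<^sub>m pmat n r"
  shows "conj_pv n V p = r"
  unfolding conj_pv_def
proof (rule the_equality)
  show "pv_valid n r \<and> (\<exists>c. V * pmat n p * adj V = c \<cdot>\<^sub>m pmat n r)" using assms by blast
next
  fix r' assume "pv_valid n r' \<and> (\<exists>c. V * pmat n p * adj V = c \<cdot>\<^sub>m pmat n r')"
  then obtain c' where "pv_valid n r'" "c \<cdot>\<^sub>m pmat n r = c' \<cdot>\<^sub>m pmat n r'" using eq by auto
  then show "r' = r" using pmat_inj[OF assms(2) _ assms(3)] by metis
qed

context
  fixes n :: nat and U :: "complex mat"
  assumes cu: "clifford_unitary n U"
begin

lemma clifford_unitary_carrier: "U \<in> carrier_mat (2 ^ n) (2 ^ n)" "adj U \<in> carrier_mat (2 ^ n) (2 ^ n)"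
  and clifford_unitary_unitary: "adj U * U = 1\<^sub>m (2 ^ n)"
  using cu adj_carrier by (auto simp: clifford_unitary_def unitary_n_def)

lemma conj_pv_spec:
  assumes p: "pv_valid n p"
  shows "pv_valid n (conj_pv n U p) \<and> (\<exists>c. c \<noteq> 0 \<and> U * pmat n p * adj U = c \<cdot>\<^sub>m pmat n (conj_pv n U p))"
proof -
  obtain c r where r: "pv_valid n r" and eq: "U * pmat n p * adj U = c \<cdot>\<^sub>m pmat n r"
    using cu p by (auto simp: clifford_unitary_def clifford_n_def)
  have "c \<noteq> 0"
  proof
    assume "c = 0"
    have "pmat n p = adj U * (U * pmat n p * adj U) * U"
      by (simp add: unitary_sandwich_inverse[OF clifford_unitary_carrier(1) clifford_unitary_unitary])
    then have "pmat n p = adj U * (0 \<cdot>\<^sub>m pmat n r) * U"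
      using eq \<open>c = 0\<close> by simp
    then have "1 \<cdot>\<^sub>m pmat n p = 0 \<cdot>\<^sub>m pmat n p"
      using clifford_unitary_carrier by (simp add: smult_sandwich[of _ "2 ^ n"] smult_smult_mat)
    then show False using smult_pmat_cancel by fastforce
  qed
  then show ?thesis using conj_pv_eqI[OF p r _ eq] r eq by auto
qed

lemma sandwich_pmat_mult:
  assumes "U * pmat n p * adj U = c \<cdot>\<^sub>m pmat n p'" "U * pmat n r * adj U = d \<cdot>\<^sub>m pmat n r'"
  shows "U * (pmat n p * pmat n r) * adj U = (c * d * pauli_phase n p' r') \<cdot>\<^sub>m pmat n (pv_mult p' r')"
proof -
  have "U * (pmat n p * pmat n r) * adj U = (U * pmat n p * adj U) * (U * pmat n r * adj U)"
    by (rule unitary_sandwich_mult[OF clifford_unitary_carrier(1) clifford_unitary_unitary, symmetric]) simp_all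
  then show ?thesis by (simp add: assms smult_pmat_mult)
qed

lemma pv_valid_conj_pv: "pv_valid n p \<Longrightarrow> pv_valid n (conj_pv n U p)"
  using conj_pv_spec by blast

lemma conj_pv_mult:
  assumes p: "pv_valid n p" and r: "pv_valid n r"
  shows "conj_pv n U (pv_mult p r) = pv_mult (conj_pv n U p) (conj_pv n U r)"
proof -
  let ?p' = "conj_pv n U p" and ?r' = "conj_pv n U r"
  obtain c d where cd: "c \<noteq> 0" "d \<noteq> 0"
    and eqs: "U * pmat n p * adj U = c \<cdot>\<^sub>m pmat n ?p'" "U * pmat n r * adj U = d \<cdot>\<^sub>m pmat n ?r'"
    using conj_pv_spec[OF p] conj_pv_spec[OF r] by blast
  have "U * (pmat n p * pmat n r) * adj U = (c * d * pauli_phase n ?p' ?r') \<cdot>\<^sub>m pmat n (pv_mult ?p' ?r')"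
    using eqs by (rule sandwich_pmat_mult)
  then have "pauli_phase n p r \<cdot>\<^sub>m (U * pmat n (pv_mult p r) * adj U)
      = (c * d * pauli_phase n ?p' ?r') \<cdot>\<^sub>m pmat n (pv_mult ?p' ?r')"
    using clifford_unitary_carrier by (simp add: pmat_mult smult_sandwich[of _ "2 ^ n"])
  then have "U * pmat n (pv_mult p r) * adj U
      = (1 / pauli_phase n p r) \<cdot>\<^sub>m ((c * d * pauli_phase n ?p' ?r') \<cdot>\<^sub>m pmat n (pv_mult ?p' ?r'))"
    using pauli_phase_nonzero[of n p r] smult_eq_iff_eq_inverse_smult by blast
  then have eq: "U * pmat n (pv_mult p r) * adj U
      = (c * d * pauli_phase n ?p' ?r' / pauli_phase n p r) \<cdot>\<^sub>m pmat n (pv_mult ?p' ?r')"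
    by (simp add: smult_smult_mat)
  show ?thesis
    using cd pauli_phase_nonzero
    by (intro conj_pv_eqI[OF pv_valid_mult[OF p r] pv_valid_mult[OF pv_valid_conj_pv[OF p] pv_valid_conj_pv[OF r]] _ eq])
      simp
qed

lemma pv_symp_conj_pv:
  assumes p: "pv_valid n p" and r: "pv_valid n r"
  shows "pv_symp n (conj_pv n U p) (conj_pv n U r) = pv_symp n p r"
proof -
  let ?p' = "conj_pv n U p" and ?r' = "conj_pv n U r"
  let ?sign = "\<lambda>a b. if pv_symp n a b then -1 else 1 :: complex"
  obtain c d where cd: "c \<noteq> 0" "d \<noteq> 0"
    and "U * pmat n p * adj U = c \<cdot>\<^sub>m pmat n ?p'" "U * pmat n r * adj U = d \<cdot>\<^sub>m pmat n ?r'"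
    using conj_pv_spec[OF p] conj_pv_spec[OF r] by blast
  then have pr: "U * (pmat n p * pmat n r) * adj U = (c * d * pauli_phase n ?p' ?r') \<cdot>\<^sub>m pmat n (pv_mult ?p' ?r')"
    and rp: "U * (pmat n r * pmat n p) * adj U = (d * c * pauli_phase n ?r' ?p') \<cdot>\<^sub>m pmat n (pv_mult ?r' ?p')"
    by (simp_all add: sandwich_pmat_mult)
  have "pmat n p * pmat n r = ?sign p r \<cdot>\<^sub>m (pmat n r * pmat n p)"
    using pauli_phase_swap[of n p r] by (simp add: pmat_mult smult_smult_mat pv_mult_commute[of r p])
  then have "U * (pmat n p * pmat n r) * adj U = ?sign p r \<cdot>\<^sub>m (U * (pmat n r * pmat n p) * adj U)"
    using clifford_unitary_carrier by (simp add: smult_sandwich[of _ "2 ^ n"] mult_carrier_mat[of _ _ "2 ^ n"])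
  then have "(c * d * pauli_phase n ?p' ?r') \<cdot>\<^sub>m pmat n (pv_mult ?p' ?r')
      = (?sign p r * (d * c * pauli_phase n ?r' ?p')) \<cdot>\<^sub>m pmat n (pv_mult ?p' ?r')"
    by (simp add: pr rp smult_smult_mat pv_mult_commute)
  then have "c * d * pauli_phase n ?p' ?r' = ?sign p r * (d * c * pauli_phase n ?r' ?p')"
    by (rule smult_pmat_cancel)
  then have "?sign ?p' ?r' = ?sign p r"
    using cd pauli_phase_nonzero[of n ?r' ?p'] by (subst (asm) pauli_phase_swap) simp
  then show ?thesis by (simp split: if_splits)
qed

lemma conj_pv_inj:
  assumes p: "pv_valid n p" and r: "pv_valid n r" and eq: "conj_pv n U p = conj_pv n U r"
  shows "p = r"
proof -
  have undo: "pmat n t = c \<cdot>\<^sub>m (adj U * pmat n (conj_pv n U p) * U)"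
    if "U * pmat n t * adj U = c \<cdot>\<^sub>m pmat n (conj_pv n U p)" for t c
    using unitary_sandwich_inverse[OF clifford_unitary_carrier(1) clifford_unitary_unitary, of "pmat n t"]
      clifford_unitary_carrier by (simp add: that smult_sandwich[of _ "2 ^ n"])
  obtain c d where "c \<noteq> 0" "d \<noteq> 0"
    and "pmat n p = c \<cdot>\<^sub>m (adj U * pmat n (conj_pv n U p) * U)"
    and "pmat n r = d \<cdot>\<^sub>m (adj U * pmat n (conj_pv n U p) * U)"
    using conj_pv_spec[OF p] conj_pv_spec[OF r] eq undo by metis
  then have "d \<cdot>\<^sub>m pmat n p = c \<cdot>\<^sub>m pmat n r" by (simp add: smult_smult_mat mult.commute)
  then show ?thesis using pmat_inj[OF p r \<open>d \<noteq> 0\<close>] by blast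
qed

lemma conj_pv_surj: "pv_valid n x \<Longrightarrow> \<exists>p. pv_valid n p \<and> conj_pv n U p = x"
  using endo_inj_surj[OF finite_pv_valid, of "conj_pv n U" n]
  by (force simp: pv_valid_conj_pv inj_on_def intro: conj_pv_inj)

lemma conj_pv_adj_conj_pv:
  assumes p: "pv_valid n p"
  shows "conj_pv n (adj U) (conj_pv n U p) = p"
proof -
  obtain c where "c \<noteq> 0" and "U * pmat n p * adj U = c \<cdot>\<^sub>m pmat n (conj_pv n U p)"
    using conj_pv_spec[OF p] by blast
  then have "pmat n p = c \<cdot>\<^sub>m (adj U * pmat n (conj_pv n U p) * adj (adj U))"
    using unitary_sandwich_inverse[OF clifford_unitary_carrier(1) clifford_unitary_unitary, of "pmat n p"]
      clifford_unitary_carrier by (simp add: smult_sandwich[of _ "2 ^ n"])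
  then have "adj U * pmat n (conj_pv n U p) * adj (adj U) = (1 / c) \<cdot>\<^sub>m pmat n p"
    using \<open>c \<noteq> 0\<close> by (simp add: smult_eq_iff_eq_inverse_smult[symmetric])
  then show ?thesis using \<open>c \<noteq> 0\<close> p pv_valid_conj_pv[OF p] by (intro conj_pv_eqI) auto
qed

lemma conj_pv_adj:
  assumes "pv_valid n x"
  shows "pv_valid n (conj_pv n (adj U) x)" "conj_pv n U (conj_pv n (adj U) x) = x"
  using conj_pv_surj[OF assms] conj_pv_adj_conj_pv by auto

lemma pv_symp_conj_pv_adj:
  assumes "pv_valid n p" "pv_valid n x"
  shows "pv_symp n p (conj_pv n (adj U) x) = pv_symp n (conj_pv n U p) x"
  using pv_symp_conj_pv[OF assms(1) conj_pv_adj(1)[OF assms(2)]] conj_pv_adj(2)[OF assms(2)] by simp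

lemma conj_pv_one: "conj_pv n U pv_one = pv_one"
  using conj_pv_mult[of pv_one pv_one] by simp

end

lemma clifford_unitary_one: "clifford_unitary n (1\<^sub>m (2 ^ n))"
  unfolding clifford_unitary_def unitary_n_def clifford_n_def by (auto intro!: exI[of _ 1])

lemma clifford_unitary_mult:
  assumes U: "clifford_unitary n U" and A: "clifford_unitary n A"
  shows "clifford_unitary n (U * A)"
proof -
  note carriers = clifford_unitary_carrier[OF U] clifford_unitary_carrier[OF A]
  have adj_UA: "adj (U * A) = adj A * adj U" using carriers by (simp add: adj_mult)
  have "adj (U * A) * (U * A) = adj A * (adj U * U) * A"
    using carriers by (simp add: adj_UA assoc_mult_mat[of _ "2 ^ n" "2 ^ n" _ "2 ^ n" _ "2 ^ n"])
  then have unitary: "adj (U * A) * (U * A) = 1\<^sub>m (2 ^ n)"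
    using carriers clifford_unitary_unitary[OF U] clifford_unitary_unitary[OF A] by simp
  have "\<exists>c r. pv_valid n r \<and> U * A * pmat n p * adj (U * A) = c \<cdot>\<^sub>m pmat n r" if p: "pv_valid n p" for p
  proof -
    obtain c where c: "A * pmat n p * adj A = c \<cdot>\<^sub>m pmat n (conj_pv n A p)"
      using conj_pv_spec[OF A p] by blast
    obtain d where d: "U * pmat n (conj_pv n A p) * adj U = d \<cdot>\<^sub>m pmat n (conj_pv n U (conj_pv n A p))"
      using conj_pv_spec[OF U pv_valid_conj_pv[OF A p]] by blast
    have "U * A * pmat n p * adj (U * A) = U * (A * pmat n p * adj A) * adj U"
      using carriers by (simp add: adj_UA assoc_mult_mat[of _ "2 ^ n" "2 ^ n" _ "2 ^ n" _ "2 ^ n"]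
          mult_carrier_mat[of _ _ "2 ^ n"])
    also have "\<dots> = (c * d) \<cdot>\<^sub>m pmat n (conj_pv n U (conj_pv n A p))"
      using carriers by (simp add: c d smult_sandwich[of _ "2 ^ n"] smult_smult_mat)
    finally show ?thesis using pv_valid_conj_pv[OF U pv_valid_conj_pv[OF A p]] by blast
  qed
  then show ?thesis using carriers unitary
    by (simp add: clifford_unitary_def unitary_n_def clifford_n_def)
qed

lemma clifford_unitary_Umat:
  assumes "clifford_circuit n C"
  shows "clifford_unitary n (Umat n C l)"
proof -
  have "clifford_unitary n (foldl (\<lambda>acc g. case g of Gate A U l' \<Rightarrow> if l' = l then U * acc else acc
                                              | Meas s p l' \<Rightarrow> acc) M gs)"
    if "\<forall>x\<in>set gs. op_valid n x" "clifford_unitary n M" for gs M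
    using that
  proof (induction gs arbitrary: M)
    case (Cons g gs)
    have gate: "clifford_unitary n U" if "Gate A U l' \<in> set (g # gs)" for A U l'
      using that Cons.prems(1) by (auto simp: clifford_unitary_def)
    have "clifford_unitary n (case g of Gate A U l' \<Rightarrow> if l' = l then U * M else M | Meas s p l' \<Rightarrow> M)"
      using Cons.prems(2) gate by (cases g) (auto intro: clifford_unitary_mult)
    then show ?case using Cons by simp
  qed simp
  then show ?thesis
    using assms clifford_unitary_one by (simp add: Umat_def clifford_circuit_def)
qed

lemma Meas_in_circuit: "(s, p, l) \<in> set (meas_list C) \<Longrightarrow> Meas s p l \<in> set C"
  by (induction C rule: meas_list.induct) auto

lemma meas_pauli_level:
  assumes "clifford_circuit n C" "j < nmeas C"
  shows "pv_valid n (meas_pauli C j)" "1 \<le> meas_level C j" "meas_level C j \<le> depth C"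
proof -
  have "(fst (meas_list C ! j), meas_pauli C j, meas_level C j) \<in> set (meas_list C)"
    using assms(2) by (simp add: nmeas_def meas_pauli_def meas_level_def)
  then have M: "Meas (fst (meas_list C ! j)) (meas_pauli C j) (meas_level C j) \<in> set C"
    by (rule Meas_in_circuit)
  then show "pv_valid n (meas_pauli C j)" "1 \<le> meas_level C j"
    using assms(1) by (fastforce simp: clifford_circuit_def)+
  show "meas_level C j \<le> depth C"
    using M unfolding depth_def by (intro Max_ge) force+
qed

lemma sorted_wrt_meas_list:
  assumes "sorted_wrt (\<lambda>x y. op_level x = op_level y \<longrightarrow> op_supp x \<inter> op_supp y = {}) C"
  shows "sorted_wrt (\<lambda>(_, p, l) (_, p', l'). l = l' \<longrightarrow> pv_supp p \<inter> pv_supp p' = {}) (meas_list C)"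
  using assms by (induction C rule: meas_list.induct) (simp_all, fastforce dest: Meas_in_circuit)

lemma meas_supp_disjoint:
  assumes circ: "clifford_circuit n C" and "j < nmeas C" "j' < nmeas C" "j \<noteq> j'"
    and "meas_level C j = meas_level C j'"
  shows "pv_supp (meas_pauli C j) \<inter> pv_supp (meas_pauli C j') = {}"
proof -
  have "sorted_wrt (\<lambda>x y. op_level x = op_level y \<longrightarrow> op_supp x \<inter> op_supp y = {}) C"
    using circ unfolding clifford_circuit_def sorted_wrt_iff_nth_less by auto
  then have sorted: "sorted_wrt (\<lambda>(_, p, l) (_, p', l'). l = l' \<longrightarrow> pv_supp p \<inter> pv_supp p' = {}) (meas_list C)"
    by (rule sorted_wrt_meas_list)
  have earlier: "pv_supp (meas_pauli C i) \<inter> pv_supp (meas_pauli C k) = {}"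
    if "i < k" "k < nmeas C" "meas_level C i = meas_level C k" for i k
    using sorted that unfolding sorted_wrt_iff_nth_less nmeas_def meas_pauli_def meas_level_def
    by (auto simp: case_prod_beta)
  show ?thesis
    using assms(2-) earlier[of j j'] earlier[of j' j] by (cases "j < j'") (auto simp: Int_commute)
qed

lemma st_mult_assoc: "st_mult (st_mult F G) H = st_mult F (st_mult G H)"
  by (simp add: st_mult_def pv_mult_assoc)

lemma st_mult_commute: "st_mult F G = st_mult G F"
  by (simp add: st_mult_def pv_mult_commute)

lemma st_mult_left_commute: "st_mult F (st_mult G H) = st_mult G (st_mult F H)"
  by (metis st_mult_assoc st_mult_commute)

lemma st_mult_one [simp]: "st_mult st_one F = F" "st_mult F st_one = F"
  by (simp_all add: st_mult_def st_one_def)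

lemma st_mult_self [simp]: "st_mult F F = st_one"
  by (simp add: st_mult_def st_one_def)

lemma st_mult_cancel_left [simp]: "st_mult F (st_mult F G) = G"
  by (simp flip: st_mult_assoc)

lemma st_valid_mult: "st_valid n D F \<Longrightarrow> st_valid n D G \<Longrightarrow> st_valid n D (st_mult F G)"
  by (auto simp: st_valid_def st_mult_def pv_valid_mult)

lemma st_valid_one [simp]: "st_valid n D st_one"
  by (simp add: st_valid_def st_one_def)

definition st_symp :: "nat \<Rightarrow> nat \<Rightarrow> stp \<Rightarrow> stp \<Rightarrow> bool" where
  "st_symp n D F G = parity {..D} (\<lambda>l. pv_symp n (F l) (G l))"

lemma st_commute_iff_not_symp: "st_commute n D F G \<longleftrightarrow> \<not> st_symp n D F G"
proof -
  have "{(l, q). l \<le> D \<and> q < n \<and> pv_anticomm_at (F l) (G l) q}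
      = {z \<in> {..D} \<times> {..<n}. (\<lambda>(l, q). pv_anticomm_at (F l) (G l) q) z}" by auto
  then have "st_commute n D F G \<longleftrightarrow> \<not> parity ({..D} \<times> {..<n}) (\<lambda>(l, q). pv_anticomm_at (F l) (G l) q)"
    by (simp add: st_commute_def parity_def)
  then show ?thesis by (simp add: parity_Times st_symp_def pv_symp_def)
qed

lemma st_symp_mult_left: "st_symp n D (st_mult F F') G = (st_symp n D F G \<noteq> st_symp n D F' G)"
proof -
  have "st_symp n D (st_mult F F') G = parity {..D} (\<lambda>l. pv_symp n (F l) (G l) \<noteq> pv_symp n (F' l) (G l))"
    unfolding st_symp_def by (rule parity_cong) (simp add: st_mult_def pv_symp_mult_left)
  then show ?thesis
    using parity_xor[of "{..D}" "\<lambda>l. pv_symp n (F l) (G l)" "\<lambda>l. pv_symp n (F' l) (G l)"]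
    by (simp add: st_symp_def)
qed

lemma st_symp_one [simp]: "st_symp n D st_one G = False"
  by (simp add: st_symp_def st_one_def)

lemma eta_apply: "eta k P l = (if l = k then P else pv_one)"
  by (simp add: eta_def)

lemma st_symp_eta: "k \<le> D \<Longrightarrow> st_symp n D (eta k P) G = pv_symp n P (G k)"
  unfolding st_symp_def by (subst parity_singleton[of _ _ k]) (auto simp: eta_apply split: if_splits)

lemma eta_mult: "eta k (pv_mult P Q) = st_mult (eta k P) (eta k Q)"
  by (auto simp: eta_def st_mult_def)

lemma eta_one: "eta k pv_one = st_one"
  by (auto simp: eta_def st_one_def)

lemma eta_in_gf2_span_image:
  "gf2_span pv_mult pv_one B = {p. pv_valid n p} \<Longrightarrow> pv_valid n Q \<Longrightarrow>
   eta k Q \<in> gf2_span st_mult st_one (eta k ` B)"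
  by (rule gf2_span_hom[where V = UNIV]) (auto simp: eta_mult eta_one)

lemma st_valid_eta: "pv_valid n P \<Longrightarrow> k \<le> D \<Longrightarrow> st_valid n D (eta k P)"
  by (auto simp: st_valid_def eta_def)

section \<open>Back-cumulants\<close>

context
  fixes n :: nat and C :: "cop list"
  assumes circ: "clifford_circuit n C"
begin

lemma st_valid_Gop: "pv_valid n P \<Longrightarrow> 1 \<le> l \<Longrightarrow> l \<le> depth C \<Longrightarrow> st_valid n (depth C) (Gop n C P l)"
  unfolding Gop_def
  by (intro st_valid_mult st_valid_eta pv_valid_conj_pv[OF clifford_unitary_Umat[OF circ]]) auto

lemma Gop_mult:
  "pv_valid n P \<Longrightarrow> pv_valid n Q \<Longrightarrow> Gop n C (pv_mult P Q) l = st_mult (Gop n C P l) (Gop n C Q l)"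
  unfolding Gop_def
  by (simp add: conj_pv_mult[OF clifford_unitary_Umat[OF circ]] eta_mult st_mult_assoc st_mult_left_commute)

lemma Gop_one: "Gop n C pv_one l = st_one"
  by (simp add: Gop_def conj_pv_one[OF clifford_unitary_Umat[OF circ]] eta_one)

lemma Gop_in_gf2_span_image:
  assumes "gf2_span pv_mult pv_one B = comm_space n C l" "P \<in> comm_space n C l"
  shows "Gop n C P l \<in> gf2_span st_mult st_one ((\<lambda>P. Gop n C P l) ` B)"
proof (rule gf2_span_hom[where V = "{p. pv_valid n p}"])
  show "P \<in> gf2_span pv_mult pv_one B" using assms by simp
  show "B \<subseteq> {p. pv_valid n p}"
    using gf2_span_superset[of pv_mult pv_one B] assms(1) by (auto simp: comm_space_def)
qed (auto intro: pv_valid_mult simp: Gop_mult Gop_one)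

lemma pv_valid_backcum: "(\<And>l. pv_valid n (H l)) \<Longrightarrow> pv_valid n (backcum n C H l)"
proof -
  assume H: "\<And>l. pv_valid n (H l)"
  have "pv_valid n (bcl n C H d)" for d
    by (induction d) (auto intro: H pv_valid_mult conj_pv_adj(1)[OF clifford_unitary_Umat[OF circ]])
  then show ?thesis using H by (simp add: backcum_def)
qed

lemma backcum_depth: "backcum n C H (depth C) = H (depth C)"
  by (simp add: backcum_def)

lemma backcum_step:
  assumes "1 \<le> l" "l \<le> depth C"
  shows "backcum n C H (l - 1) = pv_mult (H (l - 1)) (conj_pv n (adj (Umat n C l)) (backcum n C H l))"
proof -
  have index: "depth C - (l - 1) = Suc (depth C - l)" "depth C - Suc (depth C - l) = l - 1"
    "depth C - (depth C - l) = l"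
    using assms by auto
  have "l - 1 \<le> depth C" using assms by simp
  then have "backcum n C H (l - 1) = bcl n C H (Suc (depth C - l))"
    by (simp only: backcum_def index(1) if_True)
  also have "\<dots> = pv_mult (H (l - 1)) (conj_pv n (adj (Umat n C l)) (bcl n C H (depth C - l)))"
    by (simp only: bcl.simps index(2,3))
  finally show ?thesis using assms by (simp add: backcum_def)
qed

text \<open>Conjugation preserves the symplectic form, so the factor U_l in G(P,l) cancels
  against the U_l^{-1} in the back-cumulant.\<close>
lemma st_symp_Gop_backcum:
  assumes l: "1 \<le> l" "l \<le> depth C" and P: "pv_valid n P" and H: "\<And>l. pv_valid n (H l)"
  shows "st_symp n (depth C) (Gop n C P l) (backcum n C H) = pv_symp n P (H (l - 1))"
proof -
  let ?B = "backcum n C H" and ?U = "Umat n C l"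
  have "st_symp n (depth C) (Gop n C P l) ?B = (pv_symp n P (?B (l - 1)) \<noteq> pv_symp n (conj_pv n ?U P) (?B l))"
    unfolding Gop_def using l by (simp add: st_symp_mult_left st_symp_eta)
  also have "pv_symp n P (?B (l - 1)) = (pv_symp n P (H (l - 1)) \<noteq> pv_symp n P (conj_pv n (adj ?U) (?B l)))"
    by (subst backcum_step[OF l]) (simp add: pv_symp_mult_right)
  also have "pv_symp n P (conj_pv n (adj ?U) (?B l)) = pv_symp n (conj_pv n ?U P) (?B l)"
    by (rule pv_symp_conj_pv_adj[OF clifford_unitary_Umat[OF circ] P pv_valid_backcum[OF H]])
  finally show ?thesis by blast
qed

lemma st_symp_eta_backcum:
  "st_symp n (depth C) (eta (depth C) P) (backcum n C H) = pv_symp n P (H (depth C))"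
  by (simp add: st_symp_eta backcum_depth)

end

lemma foldr_cond_mult_apply:
  "foldr (\<lambda>j acc. if v j then st_mult (g j) acc else acc) xs st_one l
   = foldr (\<lambda>j acc. if v j then pv_mult (g j l) acc else acc) xs pv_one"
  by (induction xs) (auto simp: st_mult_def st_one_def)

lemma parity_foldr_cond_mult:
  assumes "\<And>x y. f (mul x y) = (f x \<noteq> f y)" "f neutral = False" "distinct xs"
  shows "f (foldr (\<lambda>j acc. if v j then mul (g j) acc else acc) xs neutral) = parity (set xs) (\<lambda>j. v j \<and> f (g j))"
  using assms(3) by (induction xs) (auto simp: assms(1,2) parity_insert)

lemma foldr_cond_mult_closed:
  assumes "Q neutral" "\<And>x y. Q x \<Longrightarrow> Q y \<Longrightarrow> Q (mul x y)" "\<forall>j\<in>set xs. v j \<longrightarrow> Q (g j)"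
  shows "Q (foldr (\<lambda>j acc. if v j then mul (g j) acc else acc) xs neutral)"
  using assms(3) by (induction xs) (auto intro: assms(1,2))

lemma Lop_xor: "Lop n C Ps (bs_xor a b) = st_mult (Lop n C Ps a) (Lop n C Ps b)"
proof -
  have "foldr (\<lambda>j acc. if bs_xor a b j then st_mult (g j) acc else acc) xs st_one
      = st_mult (foldr (\<lambda>j acc. if a j then st_mult (g j) acc else acc) xs st_one)
                (foldr (\<lambda>j acc. if b j then st_mult (g j) acc else acc) xs st_one)" for g xs
    by (induction xs) (auto simp: bs_xor_def st_mult_assoc st_mult_left_commute)
  then show ?thesis by (simp add: Lop_def)
qed

lemma Lop_zero: "Lop n C Ps bs_zero = st_one"
proof -
  have "foldr (\<lambda>j acc. if bs_zero j then st_mult (g j) acc else acc) xs st_one = st_one" for g xs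
    by (induction xs) (simp_all add: bs_zero_def)
  then show ?thesis by (simp add: Lop_def)
qed

context
  fixes n :: nat and C :: "cop list"
  assumes circ: "clifford_circuit n C"
begin

lemma fault_of_apply:
  "fault_of C u l = foldr (\<lambda>j acc. if u j then pv_mult (eta (meas_level C j - 1) (meas_pauli C j) l) acc else acc)
     [0..<nmeas C] pv_one"
  by (simp add: fault_of_def foldr_cond_mult_apply)

lemma pv_valid_fault_of: "pv_valid n (fault_of C u l)"
  unfolding fault_of_apply
  by (rule foldr_cond_mult_closed[where Q = "pv_valid n"]) (auto intro: pv_valid_mult simp: eta_apply meas_pauli_level[OF circ])

lemma pv_symp_fault_of:
  "pv_symp n P (fault_of C u l) = parity {..<nmeas C} (\<lambda>j. u j \<and> meas_level C j - 1 = l \<and> pv_symp n P (meas_pauli C j))"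
proof -
  have "pv_symp n P (fault_of C u l)
      = parity {..<nmeas C} (\<lambda>j. u j \<and> pv_symp n P (eta (meas_level C j - 1) (meas_pauli C j) l))"
    unfolding fault_of_apply atLeast_upt
    by (rule parity_foldr_cond_mult[where f = "pv_symp n P"]) (auto simp: pv_symp_mult_right)
  also have "\<dots> = parity {..<nmeas C} (\<lambda>j. u j \<and> meas_level C j - 1 = l \<and> pv_symp n P (meas_pauli C j))"
    by (rule parity_cong) (auto simp: eta_apply)
  finally show ?thesis .
qed

lemma st_symp_Gop_fault_of:
  assumes l: "1 \<le> l" "l \<le> depth C" and P: "pv_valid n P"
  shows "st_symp n (depth C) (Gop n C P l) (backcum n C (fault_of C u))
       = parity {..<nmeas C} (\<lambda>j. u j \<and> meas_level C j = l \<and> pv_symp n P (meas_pauli C j))"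
proof -
  have "st_symp n (depth C) (Gop n C P l) (backcum n C (fault_of C u))
      = parity {..<nmeas C} (\<lambda>j. u j \<and> meas_level C j - 1 = l - 1 \<and> pv_symp n P (meas_pauli C j))"
    by (simp add: st_symp_Gop_backcum[OF circ l P] pv_valid_fault_of pv_symp_fault_of)
  also have "\<dots> = parity {..<nmeas C} (\<lambda>j. u j \<and> meas_level C j = l \<and> pv_symp n P (meas_pauli C j))"
    using l meas_pauli_level(2)[OF circ] by (intro parity_cong) fastforce
  finally show ?thesis .
qed

lemma st_symp_eta_fault_of: "\<not> st_symp n (depth C) (eta (depth C) P) (backcum n C (fault_of C u))"
proof -
  have "pv_symp n P (fault_of C u (depth C)) = parity {..<nmeas C} (\<lambda>_. False)"
    unfolding pv_symp_fault_of using meas_pauli_level(2,3)[OF circ] by (intro parity_cong) force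
  then show ?thesis by (simp add: st_symp_eta_backcum[OF circ])
qed

end

context
  fixes n :: nat and C :: "cop list" and Ps :: "nat \<Rightarrow> pv"
  assumes circ: "clifford_circuit n C"
    and Ps: "\<forall>j<nmeas C. pv_valid n (Ps j) \<and> pv_supp (Ps j) \<subseteq> pv_supp (meas_pauli C j)
               \<and> \<not> pv_commute n (Ps j) (meas_pauli C j)"
begin

lemma pv_symp_Ps_meas_pauli:
  assumes "j < nmeas C" "j' < nmeas C" "meas_level C j = meas_level C j'"
  shows "pv_symp n (Ps j) (meas_pauli C j') \<longleftrightarrow> j = j'"
proof (cases "j = j'")
  case True
  then show ?thesis using Ps assms(1) by (simp add: pv_commute_iff_not_symp)
next
  case False
  then have "pv_supp (Ps j) \<inter> pv_supp (meas_pauli C j') = {}"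
    using meas_supp_disjoint[OF circ assms(1,2) False assms(3)] Ps assms(1) by blast
  then show ?thesis using False pv_symp_disjoint_supp by blast
qed

lemma st_symp_Gop_Ps_fault_of:
  assumes j: "j < nmeas C"
  shows "st_symp n (depth C) (Gop n C (Ps j) (meas_level C j)) (backcum n C (fault_of C u)) = u j"
proof -
  have "st_symp n (depth C) (Gop n C (Ps j) (meas_level C j)) (backcum n C (fault_of C u))
      = parity {..<nmeas C} (\<lambda>j'. u j' \<and> meas_level C j' = meas_level C j \<and> pv_symp n (Ps j) (meas_pauli C j'))"
    by (rule st_symp_Gop_fault_of[OF circ meas_pauli_level(2,3)[OF circ j]]) (use Ps j in blast)
  also have "\<dots> = (j \<in> {..<nmeas C} \<and> u j \<and> meas_level C j = meas_level C j \<and> pv_symp n (Ps j) (meas_pauli C j))"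
  proof (rule parity_singleton)
    fix j' assume "j' \<in> {..<nmeas C}"
      and "u j' \<and> meas_level C j' = meas_level C j \<and> pv_symp n (Ps j) (meas_pauli C j')"
    then show "j' = j" using pv_symp_Ps_meas_pauli[OF j, of j'] by auto
  qed simp
  also have "\<dots> = u j" using j pv_symp_Ps_meas_pauli[OF j j] by simp
  finally show ?thesis .
qed

lemma st_valid_Lop: "st_valid n (depth C) (Lop n C Ps v)"
  unfolding Lop_def
  by (rule foldr_cond_mult_closed[where Q = "st_valid n (depth C)"])
    (use Ps meas_pauli_level[OF circ] in \<open>auto intro: st_valid_mult st_valid_Gop[OF circ]\<close>)

lemma st_symp_Lop_fault_of:
  "st_symp n (depth C) (Lop n C Ps v) (backcum n C (fault_of C u)) = bs_dot (nmeas C) v u"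
proof -
  let ?B = "backcum n C (fault_of C u)"
  have "st_symp n (depth C) (Lop n C Ps v) ?B
      = parity {..<nmeas C} (\<lambda>j. v j \<and> st_symp n (depth C) (Gop n C (Ps j) (meas_level C j)) ?B)"
    unfolding Lop_def atLeast_upt
    by (rule parity_foldr_cond_mult[where f = "\<lambda>F. st_symp n (depth C) F ?B"]) (auto simp: st_symp_mult_left)
  also have "\<dots> = bs_dot (nmeas C) v u"
    unfolding bs_dot_def by (rule parity_cong) (simp add: st_symp_Gop_Ps_fault_of)
  finally show ?thesis .
qed

definition Ps_prod :: "(nat \<Rightarrow> bool) \<Rightarrow> pv" where
  "Ps_prod v = foldr (\<lambda>j acc. if v j then pv_mult (Ps j) acc else acc) [0..<nmeas C] pv_one"

lemma pv_valid_Ps_prod: "pv_valid n (Ps_prod v)"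
  unfolding Ps_prod_def by (rule foldr_cond_mult_closed[where Q = "pv_valid n"]) (auto intro: pv_valid_mult simp: Ps)

lemma pv_symp_Ps_prod: "pv_symp n (Ps_prod v) S = parity {..<nmeas C} (\<lambda>j. v j \<and> pv_symp n (Ps j) S)"
  unfolding Ps_prod_def atLeast_upt
  by (rule parity_foldr_cond_mult[where f = "\<lambda>x. pv_symp n x S"]) (auto simp: pv_symp_mult_left)

lemma Lop_eq_Gop_Ps_prod:
  assumes "\<forall>j<nmeas C. v j \<longrightarrow> meas_level C j = l"
  shows "Lop n C Ps v = Gop n C (Ps_prod v) l"
proof -
  have "foldr (\<lambda>j acc. if v j then st_mult (Gop n C (Ps j) (meas_level C j)) acc else acc) xs st_one
      = Gop n C (foldr (\<lambda>j acc. if v j then pv_mult (Ps j) acc else acc) xs pv_one) l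
    \<and> pv_valid n (foldr (\<lambda>j acc. if v j then pv_mult (Ps j) acc else acc) xs pv_one)"
    if "\<forall>j\<in>set xs. j < nmeas C" for xs
    using that by (induction xs) (use assms Ps in \<open>auto simp: Gop_one[OF circ] Gop_mult[OF circ] intro: pv_valid_mult\<close>)
  then show ?thesis by (simp add: Lop_def Ps_prod_def)
qed

text \<open>Correcting P by the P_j of the level-l measurements that anticommute with P
  yields an element of the commutant of level l.\<close>
lemma Gop_mult_Lop_comm_space:
  assumes P: "pv_valid n P"
  shows "\<exists>v P'. bs_valid (nmeas C) v \<and> P' \<in> comm_space n C l
               \<and> st_mult (Gop n C P l) (Lop n C Ps v) = Gop n C P' l"
proof (intro exI conjI)
  define v where "v = (\<lambda>j. j < nmeas C \<and> meas_level C j = l \<and> pv_symp n P (meas_pauli C j))"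
  show "bs_valid (nmeas C) v" by (simp add: v_def bs_valid_def)
  show "st_mult (Gop n C P l) (Lop n C Ps v) = Gop n C (pv_mult P (Ps_prod v)) l"
    by (subst Lop_eq_Gop_Ps_prod[of v l]) (simp_all add: v_def Gop_mult[OF circ P pv_valid_Ps_prod])
  have "pv_symp n (Ps_prod v) (meas_pauli C j) = pv_symp n P (meas_pauli C j)"
    if j: "j < nmeas C" "meas_level C j = l" for j
  proof -
    have "pv_symp n (Ps_prod v) (meas_pauli C j) = parity {..<nmeas C} (\<lambda>j'. v j' \<and> pv_symp n (Ps j') (meas_pauli C j))"
      by (rule pv_symp_Ps_prod)
    also have "\<dots> = (v j \<and> pv_symp n (Ps j) (meas_pauli C j))"
      using j pv_symp_Ps_meas_pauli[OF _ j(1)] by (subst parity_singleton[of _ _ j]) (auto simp: v_def)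
    also have "\<dots> = pv_symp n P (meas_pauli C j)"
      using j pv_symp_Ps_meas_pauli[OF j(1) j(1)] by (simp add: v_def)
    finally show ?thesis .
  qed
  then show "pv_mult P (Ps_prod v) \<in> comm_space n C l"
    using P pv_valid_Ps_prod
    by (auto simp: comm_space_def pv_commute_iff_not_symp pv_symp_mult_left intro: pv_valid_mult)
qed

end

section \<open>The spacetime commutant\<close>

definition spacetime_commutant :: "nat \<Rightarrow> cop list \<Rightarrow> stp set" where
  "spacetime_commutant n C = {F. st_valid n (depth C) F \<and>
     (\<forall>u\<in>bs_perp (nmeas C) (outcome_code n C). st_commute n (depth C) F (backcum n C (fault_of C u)))}"

lemma one_in_spacetime_commutant: "st_one \<in> spacetime_commutant n C"
  by (simp add: spacetime_commutant_def st_commute_iff_not_symp)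

lemma mult_in_spacetime_commutant:
  "F \<in> spacetime_commutant n C \<Longrightarrow> G \<in> spacetime_commutant n C \<Longrightarrow> st_mult F G \<in> spacetime_commutant n C"
  by (auto simp: spacetime_commutant_def st_valid_mult st_commute_iff_not_symp st_symp_mult_left)

lemma gf2_span_subset_spacetime_commutant:
  assumes "S \<subseteq> spacetime_commutant n C"
  shows "gf2_span st_mult st_one S \<subseteq> spacetime_commutant n C"
proof
  fix x assume "x \<in> gf2_span st_mult st_one S"
  then show "x \<in> spacetime_commutant n C"
    by induction (use assms in \<open>auto intro: one_in_spacetime_commutant mult_in_spacetime_commutant\<close>)
qed

context
  fixes n :: nat and C :: "cop list"
  assumes circ: "clifford_circuit n C"
begin

lemma eta_in_spacetime_commutant: "pv_valid n P \<Longrightarrow> eta (depth C) P \<in> spacetime_commutant n C"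
  by (simp add: spacetime_commutant_def st_valid_eta st_commute_iff_not_symp st_symp_eta_fault_of[OF circ])

lemma Gop_in_spacetime_commutant:
  assumes l: "1 \<le> l" "l \<le> depth C" and P: "P \<in> comm_space n C l"
  shows "Gop n C P l \<in> spacetime_commutant n C"
proof -
  have "pv_valid n P" using P by (simp add: comm_space_def)
  moreover have "\<not> st_symp n (depth C) (Gop n C P l) (backcum n C (fault_of C u))" for u
  proof -
    have "\<not> pv_symp n P (meas_pauli C j)" if "j < nmeas C" "meas_level C j = l" for j
      using P that by (simp add: comm_space_def pv_commute_iff_not_symp)
    then have "parity {..<nmeas C} (\<lambda>j. u j \<and> meas_level C j = l \<and> pv_symp n P (meas_pauli C j))
        = parity {..<nmeas C} (\<lambda>_. False)"
      by (intro parity_cong) auto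
    then show ?thesis by (simp add: st_symp_Gop_fault_of[OF circ l \<open>pv_valid n P\<close>])
  qed
  ultimately show ?thesis
    using l by (simp add: spacetime_commutant_def st_valid_Gop[OF circ] st_commute_iff_not_symp)
qed

text \<open>Peeling off the lowest nonidentity level with a G operator walks any spacetime Pauli
  up to the top level.\<close>
lemma st_valid_in_span_eta_Gop:
  assumes "st_valid n (depth C) F"
  shows "F \<in> gf2_span st_mult st_one
    (eta (depth C) ` {P. pv_valid n P} \<union> (\<Union>l\<in>{1..depth C}. (\<lambda>P. Gop n C P l) ` {P. pv_valid n P}))"
    (is "F \<in> gf2_span st_mult st_one ?gens")
proof -
  let ?D = "depth C"
  have "F \<in> gf2_span st_mult st_one ?gens"
    if "st_valid n ?D F" "\<forall>l < ?D - k. F l = pv_one" for F k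
    using that
  proof (induction k arbitrary: F)
    case 0
    have "F = eta ?D (F ?D)"
    proof
      fix l show "F l = eta ?D (F ?D) l"
        using "0.prems" by (cases "l < ?D"; cases "l = ?D") (auto simp: eta_apply st_valid_def)
    qed
    moreover have "pv_valid n (F ?D)" using "0.prems" by (simp add: st_valid_def)
    ultimately have "F \<in> ?gens" by blast
    then show ?case using gf2_span_superset[of st_mult st_one ?gens] by auto
  next
    case (Suc k)
    show ?case
    proof (cases "k < ?D")
      case False
      then show ?thesis using Suc by simp
    next
      case True
      define a where "a = ?D - Suc k"
      have a: "Suc a = ?D - k" "Suc a \<in> {1..?D}" using True by (auto simp: a_def)
      have valid_a: "pv_valid n (F a)" using Suc.prems by (simp add: st_valid_def)
      let ?G = "Gop n C (F a) (Suc a)"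
      have "st_mult ?G F \<in> gf2_span st_mult st_one ?gens"
      proof (rule Suc.IH)
        show "st_valid n ?D (st_mult ?G F)"
          using st_valid_Gop[OF circ valid_a] a Suc.prems by (auto intro: st_valid_mult)
        show "\<forall>l < ?D - k. st_mult ?G F l = pv_one"
          using Suc.prems a by (auto simp: st_mult_def Gop_def eta_apply a_def pv_mult_commute less_Suc_eq)
      qed
      moreover have "?G \<in> ?gens" using a valid_a by blast
      ultimately have "st_mult ?G (st_mult ?G F) \<in> gf2_span st_mult st_one ?gens"
        by (rule gf2_span.span_step[rotated])
      then show ?thesis by simp
    qed
  qed
  from this[of F ?D] show ?thesis using assms by simp
qed

end

context
  fixes n :: nat and C :: "cop list" and Ps :: "nat \<Rightarrow> pv"
  assumes circ: "clifford_circuit n C"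
    and Ps: "\<forall>j<nmeas C. pv_valid n (Ps j) \<and> pv_supp (Ps j) \<subseteq> pv_supp (meas_pauli C j)
               \<and> \<not> pv_commute n (Ps j) (meas_pauli C j)"
begin

lemma Lop_in_spacetime_commutant_iff:
  assumes lin: "linear_code (outcome_code n C)" and v: "bs_valid (nmeas C) v"
  shows "Lop n C Ps v \<in> spacetime_commutant n C \<longleftrightarrow> v \<in> outcome_code n C"
proof -
  let ?m = "nmeas C" and ?Oc = "outcome_code n C"
  have valid: "?Oc \<subseteq> {w. bs_valid ?m w}" by (auto simp: outcome_code_def)
  have "Lop n C Ps v \<in> spacetime_commutant n C \<longleftrightarrow> (\<forall>u\<in>bs_perp ?m ?Oc. \<not> bs_dot ?m v u)"
    by (simp add: spacetime_commutant_def st_valid_Lop[OF circ Ps] st_commute_iff_not_symp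
        st_symp_Lop_fault_of[OF circ Ps])
  also have "\<dots> \<longleftrightarrow> v \<in> bs_perp ?m (bs_perp ?m ?Oc)"
    using v by (auto simp: bs_perp_eq bs_dot_commute)
  also have "\<dots> \<longleftrightarrow> v \<in> ?Oc"
    using bs_perp_perp_subset[OF valid lin] valid by (auto simp: bs_perp_eq bs_dot_commute)
  finally show ?thesis .
qed

lemma Lop_in_gf2_span_image:
  "v \<in> gf2_span bs_xor bs_zero B \<Longrightarrow> Lop n C Ps v \<in> gf2_span st_mult st_one (Lop n C Ps ` B)"
  by (rule gf2_span_hom[where V = UNIV]) (auto simp: Lop_xor Lop_zero)

lemma span_generators_subset_spacetime_commutant:
  assumes lin: "linear_code (outcome_code n C)"
    and "B1 \<subseteq> {p. pv_valid n p}" "\<forall>l\<in>{1..depth C}. B2 l \<subseteq> comm_space n C l"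
    and "B3 \<subseteq> outcome_code n C"
  shows "gf2_span st_mult st_one
           (eta (depth C) ` B1 \<union> (\<Union>l\<in>{1..depth C}. (\<lambda>P. Gop n C P l) ` B2 l) \<union> Lop n C Ps ` B3)
         \<subseteq> spacetime_commutant n C"
proof (rule gf2_span_subset_spacetime_commutant)
  have "bs_valid (nmeas C) v" if "v \<in> outcome_code n C" for v
    using that by (simp add: outcome_code_def)
  then show "eta (depth C) ` B1 \<union> (\<Union>l\<in>{1..depth C}. (\<lambda>P. Gop n C P l) ` B2 l) \<union> Lop n C Ps ` B3
      \<subseteq> spacetime_commutant n C"
    using assms Lop_in_spacetime_commutant_iff[OF lin]
    by (fastforce intro: eta_in_spacetime_commutant[OF circ] Gop_in_spacetime_commutant[OF circ])
qed

text \<open>Every spacetime Pauli is generated by the eta and G operators, and each G(P,l) is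
  a type (ii) generator up to some L(v).\<close>
lemma exists_Lop_correction:
  assumes B1: "gf2_span pv_mult pv_one B1 = {p. pv_valid n p}"
    and B2: "\<forall>l\<in>{1..depth C}. gf2_span pv_mult pv_one (B2 l) = comm_space n C l"
    and F: "st_valid n (depth C) F"
  shows "\<exists>v. bs_valid (nmeas C) v \<and> st_mult F (Lop n C Ps v) \<in>
           gf2_span st_mult st_one (eta (depth C) ` B1 \<union> (\<Union>l\<in>{1..depth C}. (\<lambda>P. Gop n C P l) ` B2 l))"
    (is "\<exists>v. _ \<and> _ \<in> ?Sp")
proof -
  let ?D = "depth C" and ?m = "nmeas C"
  have gen: "\<exists>v. bs_valid ?m v \<and> st_mult X (Lop n C Ps v) \<in> ?Sp"
    if X: "X \<in> eta ?D ` {P. pv_valid n P} \<union> (\<Union>l\<in>{1..?D}. (\<lambda>P. Gop n C P l) ` {P. pv_valid n P})" for X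
  proof -
    consider (eta) Q where "pv_valid n Q" "X = eta ?D Q"
      | (Gop) P l where "pv_valid n P" "l \<in> {1..?D}" "X = Gop n C P l"
      using X by blast
    then show ?thesis
    proof cases
      case eta
      then have "X \<in> gf2_span st_mult st_one (eta ?D ` B1)"
        using B1 eta_in_gf2_span_image by blast
      then show ?thesis by (intro exI[of _ bs_zero]) (auto simp: Lop_zero elim: gf2_span_mono[rotated])
    next
      case Gop
      then obtain v P' where "bs_valid ?m v" "P' \<in> comm_space n C l"
          "st_mult X (Lop n C Ps v) = Gop n C P' l"
        using Gop_mult_Lop_comm_space[OF circ Ps] by blast
      moreover from this have "Gop n C P' l \<in> gf2_span st_mult st_one ((\<lambda>P. Gop n C P l) ` B2 l)"
        using B2 Gop(2) Gop_in_gf2_span_image[OF circ] by blast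
      then have "Gop n C P' l \<in> ?Sp" by (rule gf2_span_mono[rotated]) (use Gop(2) in auto)
      ultimately show ?thesis by auto
    qed
  qed
  have "\<exists>v. bs_valid ?m v \<and> st_mult X (Lop n C Ps v) \<in> ?Sp"
    if "X \<in> gf2_span st_mult st_one
       (eta ?D ` {P. pv_valid n P} \<union> (\<Union>l\<in>{1..?D}. (\<lambda>P. Gop n C P l) ` {P. pv_valid n P}))" for X
    using that
  proof (induction rule: gf2_span.induct)
    case span_one
    show ?case by (intro exI[of _ bs_zero]) (simp add: Lop_zero gf2_span.span_one)
  next
    case (span_step x y)
    obtain v where v: "bs_valid ?m v" "st_mult x (Lop n C Ps v) \<in> ?Sp"
      using gen[OF span_step.hyps(1)] by blast
    obtain w where w: "bs_valid ?m w" "st_mult y (Lop n C Ps w) \<in> ?Sp"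
      using span_step.IH by blast
    have "st_mult (st_mult x y) (Lop n C Ps (bs_xor v w))
        = st_mult (st_mult x (Lop n C Ps v)) (st_mult y (Lop n C Ps w))"
      by (simp add: Lop_xor st_mult_assoc st_mult_left_commute)
    moreover have "st_mult (st_mult x (Lop n C Ps v)) (st_mult y (Lop n C Ps w)) \<in> ?Sp"
      using v(2) w(2) by (rule gf2_span_mult[rotated 2]) (simp_all add: st_mult_assoc)
    ultimately show ?case using bs_valid_xor[OF v(1) w(1)] by auto
  qed
  then show ?thesis using st_valid_in_span_eta_Gop[OF circ F] by blast
qed

lemma spacetime_commutant_subset_span:
  assumes lin: "linear_code (outcome_code n C)"
    and B1: "gf2_span pv_mult pv_one B1 = {p. pv_valid n p}"
    and B2: "\<forall>l\<in>{1..depth C}. gf2_span pv_mult pv_one (B2 l) = comm_space n C l"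
    and B3: "gf2_span bs_xor bs_zero B3 = outcome_code n C"
  shows "spacetime_commutant n C \<subseteq> gf2_span st_mult st_one
           (eta (depth C) ` B1 \<union> (\<Union>l\<in>{1..depth C}. (\<lambda>P. Gop n C P l) ` B2 l) \<union> Lop n C Ps ` B3)"
    (is "_ \<subseteq> gf2_span st_mult st_one (?G12 \<union> ?G3)")
proof
  fix F assume F: "F \<in> spacetime_commutant n C"
  then obtain v where v: "bs_valid (nmeas C) v"
    and X: "st_mult F (Lop n C Ps v) \<in> gf2_span st_mult st_one ?G12"
    using exists_Lop_correction[OF B1 B2] by (auto simp: spacetime_commutant_def)
  then have X': "st_mult F (Lop n C Ps v) \<in> gf2_span st_mult st_one (?G12 \<union> ?G3)"
    by (auto elim: gf2_span_mono[rotated])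
  have "B2 l \<subseteq> comm_space n C l" if "l \<in> {1..depth C}" for l
    using gf2_span_superset[of pv_mult pv_one "B2 l"] B2 that by simp
  moreover have "B1 \<subseteq> {p. pv_valid n p}" "B3 \<subseteq> outcome_code n C"
    using gf2_span_superset[of pv_mult pv_one B1] gf2_span_superset[of bs_xor bs_zero B3] B1 B3 by auto
  ultimately have "gf2_span st_mult st_one (?G12 \<union> ?G3) \<subseteq> spacetime_commutant n C"
    by (intro span_generators_subset_spacetime_commutant[OF lin]) auto
  then have "Lop n C Ps v \<in> spacetime_commutant n C"
    using X' mult_in_spacetime_commutant[OF F] by fastforce
  then have "v \<in> gf2_span bs_xor bs_zero B3"
    using Lop_in_spacetime_commutant_iff[OF lin v] B3 by simp
  then have "Lop n C Ps v \<in> gf2_span st_mult st_one ?G3"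
    by (rule Lop_in_gf2_span_image)
  then have "Lop n C Ps v \<in> gf2_span st_mult st_one (?G12 \<union> ?G3)"
    by (rule gf2_span_mono[rotated]) auto
  with X' have "st_mult (st_mult F (Lop n C Ps v)) (Lop n C Ps v) \<in> gf2_span st_mult st_one (?G12 \<union> ?G3)"
    by (rule gf2_span_mult[rotated 2]) (simp_all add: st_mult_assoc)
  then show "F \<in> gf2_span st_mult st_one (?G12 \<union> ?G3)" by (simp add: st_mult_assoc)
qed

end

theorem mainTheorem15:
  fixes n :: nat and C :: "cop list" and Ps :: "nat \<Rightarrow> pv"
    and B1 :: "pv set" and B2 :: "nat \<Rightarrow> pv set" and B3 :: "(nat \<Rightarrow> bool) set"
  assumes circ: "clifford_circuit n C"
    and lin: "linear_code (outcome_code n C)"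
    and Ps: "\<forall>j<nmeas C. pv_valid n (Ps j) \<and> pv_supp (Ps j) \<subseteq> pv_supp (meas_pauli C j)
               \<and> \<not> pv_commute n (Ps j) (meas_pauli C j)"
    and B1: "is_basis pv_mult pv_one {p. pv_valid n p} B1"
    and B2: "\<forall>l\<in>{1..depth C}. is_basis pv_mult pv_one (comm_space n C l) (B2 l)"
    and B3: "is_basis bs_xor bs_zero (outcome_code n C) B3"
  shows "gf2_span st_mult st_one
           (eta (depth C) ` B1 \<union> (\<Union>l\<in>{1..depth C}. (\<lambda>P. Gop n C P l) ` B2 l) \<union> Lop n C Ps ` B3)
         = {F. st_valid n (depth C) F \<and>
              (\<forall>u\<in>bs_perp (nmeas C) (outcome_code n C).
                 st_commute n (depth C) F (backcum n C (fault_of C u)))}"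
proof -
  have "gf2_span st_mult st_one
          (eta (depth C) ` B1 \<union> (\<Union>l\<in>{1..depth C}. (\<lambda>P. Gop n C P l) ` B2 l) \<union> Lop n C Ps ` B3)
        = spacetime_commutant n C" (is "?span = _")
  proof
    show "?span \<subseteq> spacetime_commutant n C"
      using B1 B2 B3 by (intro span_generators_subset_spacetime_commutant[OF circ Ps lin])
        (auto simp: is_basis_def)
    show "spacetime_commutant n C \<subseteq> ?span"
      using B1 B2 B3 by (intro spacetime_commutant_subset_span[OF circ Ps lin]) (auto simp: is_basis_def)
  qed
  then show ?thesis by (simp add: spacetime_commutant_def)
qed

end
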